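(* Assume the setting described in the context. For every $d\in\mathbb{N}$, $\varepsilon\in(0,1)$ let $F^d_\varepsilon\colon\mathbb{R}^d\to\mathbb{R}^{d\times d}$ and $G^d\colon\mathbb{R}^d\to\mathbb{R}^d$ be measurable with $\gamma^d_\varepsilon(y,z)=F^d_\varepsilon(y)G^d(z)$ for all $y,z\in\mathbb{R}^d$. For every $d\in\mathbb{N}$, $\varepsilon\in(0,1)$, $v\in\mathbb{R}^d$ let $\Phi_{\beta^d_\varepsilon},\Phi_{\sigma^d_\varepsilon,v},\Phi_{F^d_\varepsilon,v}\in\mathbf{N}$ satisfy $\beta^d_\varepsilon=\mathcal{R}(\Phi_{\beta^d_\varepsilon})$, $\sigma^d_\varepsilon(\cdot)v=\mathcal{R}(\Phi_{\sigma^d_\varepsilon,v})$, $F^d_\varepsilon(\cdot)v=\mathcal{R}(\Phi_{F^d_\varepsilon,v})$, and assume $\mathcal{D}(\Phi_{\sigma^d_\varepsilon,v})=\mathcal{D}(\Phi_{\sigma^d_\varepsilon,0})$ and $\mathcal{D}(\Phi_{F^d_\varepsilon,v})=\mathcal{D}(\Phi_{F^d_\varepsilon,0})$ for all $d,\varepsilon,v$. Let $K\in\mathbb{N}$ and $\omega\in\Omega$. Then there exists $(\mathcal{X}^{d,\theta,K,\varepsilon,t}_s)_{d\in\mathbb{N},\theta\in\Theta,\varepsilon\in(0,1),t\in[0,T),s\in(t,T]}\subseteq\mathbf{N}$ such that: (i) for all $d,\theta,\varepsilon$, $t\in[0,T)$, $s\in(t,T]$, $x\in\mathbb{R}^d$: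 $\mathcal{R}(\mathcal{X}^{d,\theta,K,\varepsilon,t}_s)\in C(\mathbb{R}^d,\mathbb{R}^d)$ and $(\mathcal{R}(\mathcal{X}^{d,\theta,K,\varepsilon,t}_s))(x)=X^{d,\theta,K,\varepsilon,t,x}_s(\omega)$; (ii) for all $d\in\mathbb{N}$, $\theta_1,\theta_2\in\Theta$, $\varepsilon\in(0,1)$, $t_1,t_2\in[0,T)$, $s_1\in(t_1,T]$, $s_2\in(t_2,T]$: $\mathcal{D}(\mathcal{X}^{d,\theta_1,K,\varepsilon,t_1}_{s_1})=\mathcal{D}(\mathcal{X}^{d,\theta_2,K,\varepsilon,t_2}_{s_2})$; (iii) for all $d,\theta,\varepsilon,t\in[0,T),s\in(t,T]$: $\dim(\mathcal{D}(\mathcal{X}^{d,\theta,K,\varepsilon,t}_s))=K\big(\max\{\dim(\mathcal{D}(\Phi_{\beta^d_\varepsilon})),\dim(\mathcal{D}(\Phi_{\sigma^d_\varepsilon,0})),\dim(\mathcal{D}(\Phi_{F^d_\varepsilon,0}))\}-1\big)+1$; (iv) for all $d,\theta,\varepsilon,t\in[0,T),s\in(t,T]$: $|||\mathcal{D}(\mathcal{X}^{d,\theta,K,\varepsilon,t}_s)|||\le2d+|||\mathcal{D}(\Phi_{\beta^d_\varepsilon})|||+|||\mathcal{D}(\Phi_{\sigma^d_\varepsilon,0})|||+|||\mathcal{D}(\Phi_{F^d_\varepsilon,0})|||$.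
   Context: Setting. $T\in(0,\infty)$, $c\in[2,\infty)$, $f\in C(\mathbb{R},\mathbb{R})$. For each $d\in\mathbb{N}$: $\beta^d\in C(\mathbb{R}^d,\mathbb{R}^d)$, $\sigma^d\in C(\mathbb{R}^d,\mathbb{R}^{d\times d})$, $\gamma^d\in C(\mathbb{R}^{2d},\mathbb{R}^d)$, $g^d\in C(\mathbb{R}^d,\mathbb{R})$, $\nu^d$ a Lévy measure on $\mathcal{B}(\mathbb{R}^d\setminus\{0\})$, satisfying: (A1) there is $C_d$ with $\|\gamma^d(x,z)\|^2\le C_d(1\wedge\|z\|^2)$, $\|\gamma^d(x,z)-\gamma^d(y,z)\|^2\le C_d\|x-y\|^2(1\wedge\|z\|^2)$; (A2) $D_x\gamma^d(x,z)$ exists and for some $\lambda_d>0$, $\lambda_d\le|\det(I_d+\delta D_x\gamma^d(x,z))|$ for all $x,z$, $\delta\in[0,1]$; (A3) $\|\beta^d(x)-\beta^d(y)\|^2+\|\sigma^d(x)-\sigma^d(y)\|_F^2+\int\|\gamma^d(x,z)-\gamma^d(y,z)\|^2\nu^d(dz)\le c\|x-y\|^2$, $|f(w_1)-f(w_2)|^2\le c|w_1-w_2|^2$, $|g^d(x)-g^d(y)|^2\le cd^cT^{-1}\|x-y\|^2$, $\|\beta^d(0)\|^2+\|\sigma^d(0)\|_F^2+\int\|\gamma^d(0,z)\|^2\nu^d(dz)+T^3(|f(0)|+1)^2+T|g^d(0)|^2\le cd^c$ (integrals over $\mathbb{R}^d\setminus\{0\}$). For $d\in\mathbb{N}$, $\varepsilon\in(0,1)$: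 $\beta^d_\varepsilon\in C(\mathbb{R}^d,\mathbb{R}^d)$, $\sigma^d_\varepsilon\in C(\mathbb{R}^d,\mathbb{R}^{d\times d})$, $\gamma^d_\varepsilon\in C(\mathbb{R}^{2d},\mathbb{R}^d)$, $g^d_\varepsilon\in C(\mathbb{R}^d,\mathbb{R})$ satisfying: (B1) the analogue of (A1) with a constant $C_{d,\varepsilon}$; (B2) $\|\beta^d_\varepsilon(x)-\beta^d_\varepsilon(y)\|^2+\|\sigma^d_\varepsilon(x)-\sigma^d_\varepsilon(y)\|_F^2+\int\|\gamma^d_\varepsilon(x,z)-\gamma^d_\varepsilon(y,z)\|^2\nu^d(dz)\le c\|x-y\|^2$, $|g^d_\varepsilon(x)-g^d_\varepsilon(y)|^2\le cd^cT^{-1}\|x-y\|^2$, $\|\beta^d_\varepsilon(0)\|^2+\|\sigma^d_\varepsilon(0)\|_F^2+\int\|\gamma^d_\varepsilon(0,z)\|^2\nu^d(dz)+T|g^d_\varepsilon(0)|^2\le cd^c$, and $\|\beta^d_\varepsilon(x)-\beta^d(x)\|^2+\|\sigma^d_\varepsilon(x)-\sigma^d(x)\|_F^2+\int\|\gamma^d_\varepsilon(x,z)-\gamma^d(x,z)\|^2\nu^d(dz)+|g^d_\varepsilon(x)-g^d(x)|^2\le\varepsilon cd^c(d^c+\|x\|^2)$ for all $x,y$. Probability. $(\Omega,\mathcal{F},\mathbb{P},(\mathbb{F}_t)_{t\in[0,T]})$ a filtered probability space with the usual conditions; $\Theta=\bigcup_{n\in\mathbb{N}}\mathbb{Z}^n$;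 for each $d$, $W^{d,\theta}$ ($\theta\in\Theta$) i.i.d. standard $d$-dim $(\mathbb{F}_t)$-Brownian motions, $N^{d,\theta}$ independent $(\mathbb{F}_t)$-Poisson random measures on $[0,\infty)\times(\mathbb{R}^d\setminus\{0\})$ with compensator $\nu^d(dz)dt$, $\tilde N^{d,\theta}=N^{d,\theta}-\nu^d(dz)dt$; $\mathcal{F}_0$, $(W^{d,\theta})$, $(N^{d,\theta})$ (and i.i.d. uniform variables $(\mathfrak{t}^\theta)$) independent. For $K\in\mathbb{N}$, $\lfloor t\rfloor_K=\max(\{0,\frac TK,\dots,T\}\cap((-\infty,t)\cup\{0\}))$, and $X^{d,\theta,K,\varepsilon,t,x}$ on $[t,T]$ satisfies $X_s=x+\int_t^s\beta^d_\varepsilon(X_{\max\{t,\lfloor u-\rfloor_K\}})du+\int_t^s\sigma^d_\varepsilon(X_{\max\{t,\lfloor u-\rfloor_K\}})dW^{d,\theta}_u+\int_t^s\int_{\mathbb{R}^d\setminus\{0\}}\gamma^d_\varepsilon(X_{\max\{t,\lfloor u-\rfloor_K\}},z)\tilde N^{d,\theta}(dz,du)$. Networks. $\mathbf{A}_k$ componentwise ReLU; $\mathbf{N}=\bigcup_{H\in\mathbb{N}}\bigcup_{(k_0,\dots,k_{H+1})\in\mathbb{N}^{H+2}}\prod_{m=1}^{H+1}(\mathbb{R}^{k_m\times k_{m-1}}\times\mathbb{R}^{k_m})$; for $\Phi=((W_1,B_1),\dots,(W_{H+1},B_{H+1}))$: $\mathcal{D}(\Phi)=(k_0,\dots,k_{H+1})$,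 $\mathcal{R}(\Phi)\in C(\mathbb{R}^{k_0},\mathbb{R}^{k_{H+1}})$, $(\mathcal{R}(\Phi))(x_0)=W_{H+1}x_H+B_{H+1}$ with $x_m=\mathbf{A}_{k_m}(W_mx_{m-1}+B_m)$. For a vector $x=(x_1,\dots,x_k)$: $\dim(x)=k$, $|||x|||=\max_i|x_i|$. $\|\cdot\|$ Euclidean, $\|\cdot\|_F$ Frobenius norm. *)

theory Defs
  imports "HOL-Analysis.Analysis"
begin

definition idx :: "'a::finite list" where
  "idx = (SOME xs. distinct xs \<and> set xs = UNIV)"

definition vlist :: "real^'d \<Rightarrow> real list" where
  "vlist x = map (vec_nth x) idx"

definition listv :: "real list \<Rightarrow> real^'d" where
  "listv xs = (\<chi> i. xs ! (THE n. n < length (idx :: 'd list) \<and> idx ! n = i))"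

type_synonym net = "(real list list \<times> real list) list"

definition dims :: "net \<Rightarrow> nat list" where
  "dims \<Phi> = (case \<Phi> of [] \<Rightarrow> [] | (W, B) # _ \<Rightarrow> [length (hd W)]) @ map (\<lambda>(W, B). length B) \<Phi>"

definition wf_net :: "net \<Rightarrow> bool" where
  "wf_net \<Phi> \<longleftrightarrow> length \<Phi> \<ge> 2 \<and> (\<forall>k\<in>set (dims \<Phi>). k \<ge> 1) \<and>
     (\<forall>m<length \<Phi>. length (fst (\<Phi> ! m)) = dims \<Phi> ! (Suc m) \<and>
        (\<forall>row\<in>set (fst (\<Phi> ! m)). length row = dims \<Phi> ! m))"

definition NN :: "net set" where
  "NN = {\<Phi>. wf_net \<Phi>}"

definition mv :: "real list list \<Rightarrow> real list \<Rightarrow> real list" where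
  "mv W x = map (\<lambda>row. sum_list (map2 (*) row x)) W"

fun realize :: "net \<Rightarrow> real list \<Rightarrow> real list" where
  "realize [] x = x"
| "realize [(W, B)] x = map2 (+) (mv W x) B"
| "realize ((W, B) # L) x = realize L (map (\<lambda>y. max 0 y) (map2 (+) (mv W x) B))"

definition maxnorm :: "nat list \<Rightarrow> nat" where
  "maxnorm ks = Max (set ks)"

definition realizes :: "net \<Rightarrow> (real^'d \<Rightarrow> real^'d) \<Rightarrow> bool" where
  "realizes \<Phi> h \<longleftrightarrow> \<Phi> \<in> NN \<and> hd (dims \<Phi>) = CARD('d) \<and> last (dims \<Phi>) = CARD('d) \<and>
     (\<forall>x. realize \<Phi> (vlist x) = vlist (h x))"

definition levy_measure :: "(real^'d) measure \<Rightarrow> bool" where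
  "levy_measure \<nu> \<longleftrightarrow> sets \<nu> = sets (restrict_space borel (UNIV - {0})) \<and>
     (\<integral>\<^sup>+ z. ennreal (min 1 (norm z ^ 2)) \<partial>\<nu>) < \<infinity>"

definition jump_bound :: "(real^'d \<Rightarrow> real^'d \<Rightarrow> real^'d) \<Rightarrow> bool" where
  "jump_bound \<gamma> \<longleftrightarrow> (\<exists>C. \<forall>x y z. norm (\<gamma> x z) ^ 2 \<le> C * min 1 (norm z ^ 2) \<and>
      norm (\<gamma> x z - \<gamma> y z) ^ 2 \<le> C * norm (x - y) ^ 2 * min 1 (norm z ^ 2))"

definition setting ::
  "real \<Rightarrow> real \<Rightarrow> (real \<Rightarrow> real) \<Rightarrow> (real^'d \<Rightarrow> real^'d) \<Rightarrow> (real^'d \<Rightarrow> real^'d^'d)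
   \<Rightarrow> (real^'d \<Rightarrow> real^'d \<Rightarrow> real^'d) \<Rightarrow> (real^'d \<Rightarrow> real) \<Rightarrow> (real^'d) measure
   \<Rightarrow> (real \<Rightarrow> real^'d \<Rightarrow> real^'d) \<Rightarrow> (real \<Rightarrow> real^'d \<Rightarrow> real^'d^'d)
   \<Rightarrow> (real \<Rightarrow> real^'d \<Rightarrow> real^'d \<Rightarrow> real^'d) \<Rightarrow> (real \<Rightarrow> real^'d \<Rightarrow> real) \<Rightarrow> bool" where
  "setting T c f \<beta> \<sigma> \<gamma> g \<nu> \<beta>e \<sigma>e \<gamma>e ge \<longleftrightarrow>
   (let d = real CARD('d) in
    0 < T \<and> 2 \<le> c \<and> continuous_on UNIV f \<and>
    continuous_on UNIV \<beta> \<and> continuous_on UNIV \<sigma> \<and> continuous_on UNIV (\<lambda>(x, z). \<gamma> x z) \<and>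
    continuous_on UNIV g \<and> levy_measure \<nu> \<and>
    \<comment> \<open>(A1)\<close>
    jump_bound \<gamma> \<and>
    \<comment> \<open>(A2)\<close>
    (\<exists>lam>0. \<exists>D. \<forall>x z. ((\<lambda>y. \<gamma> y z) has_derivative D x z) (at x) \<and>
        (\<forall>\<delta>\<in>{0..1}. lam \<le> \<bar>det (mat 1 + \<delta> *\<^sub>R matrix (D x z))\<bar>)) \<and>
    \<comment> \<open>(A3)\<close>
    (\<forall>x y. ennreal (norm (\<beta> x - \<beta> y) ^ 2 + norm (\<sigma> x - \<sigma> y) ^ 2)
             + (\<integral>\<^sup>+ z. ennreal (norm (\<gamma> x z - \<gamma> y z) ^ 2) \<partial>\<nu>) \<le> ennreal (c * norm (x - y) ^ 2)) \<and>
    (\<forall>w1 w2. \<bar>f w1 - f w2\<bar> ^ 2 \<le> c * \<bar>w1 - w2\<bar> ^ 2) \<and>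
    (\<forall>x y. \<bar>g x - g y\<bar> ^ 2 \<le> c * d powr c / T * norm (x - y) ^ 2) \<and>
    ennreal (norm (\<beta> 0) ^ 2 + norm (\<sigma> 0) ^ 2 + T ^ 3 * (\<bar>f 0\<bar> + 1) ^ 2 + T * \<bar>g 0\<bar> ^ 2)
      + (\<integral>\<^sup>+ z. ennreal (norm (\<gamma> 0 z) ^ 2) \<partial>\<nu>) \<le> ennreal (c * d powr c) \<and>
    \<comment> \<open>(B1), (B2)\<close>
    (\<forall>\<epsilon>\<in>{0<..<1}.
       continuous_on UNIV (\<beta>e \<epsilon>) \<and> continuous_on UNIV (\<sigma>e \<epsilon>) \<and>
       continuous_on UNIV (\<lambda>(x, z). \<gamma>e \<epsilon> x z) \<and> continuous_on UNIV (ge \<epsilon>) \<and>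
       jump_bound (\<gamma>e \<epsilon>) \<and>
       (\<forall>x y. ennreal (norm (\<beta>e \<epsilon> x - \<beta>e \<epsilon> y) ^ 2 + norm (\<sigma>e \<epsilon> x - \<sigma>e \<epsilon> y) ^ 2)
             + (\<integral>\<^sup>+ z. ennreal (norm (\<gamma>e \<epsilon> x z - \<gamma>e \<epsilon> y z) ^ 2) \<partial>\<nu>) \<le> ennreal (c * norm (x - y) ^ 2)) \<and>
       (\<forall>x y. \<bar>ge \<epsilon> x - ge \<epsilon> y\<bar> ^ 2 \<le> c * d powr c / T * norm (x - y) ^ 2) \<and>
       ennreal (norm (\<beta>e \<epsilon> 0) ^ 2 + norm (\<sigma>e \<epsilon> 0) ^ 2 + T * \<bar>ge \<epsilon> 0\<bar> ^ 2)
         + (\<integral>\<^sup>+ z. ennreal (norm (\<gamma>e \<epsilon> 0 z) ^ 2) \<partial>\<nu>) \<le> ennreal (c * d powr c) \<and>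
       (\<forall>x. ennreal (norm (\<beta>e \<epsilon> x - \<beta> x) ^ 2 + norm (\<sigma>e \<epsilon> x - \<sigma> x) ^ 2 + \<bar>ge \<epsilon> x - g x\<bar> ^ 2)
             + (\<integral>\<^sup>+ z. ennreal (norm (\<gamma>e \<epsilon> x z - \<gamma> x z) ^ 2) \<partial>\<nu>)
           \<le> ennreal (\<epsilon> * c * d powr c * (d powr c + norm x ^ 2)))))"

definition flr :: "real \<Rightarrow> nat \<Rightarrow> real \<Rightarrow> real" where
  "flr T K t = Max ({T * real k / real K | k. k \<le> K} \<inter> ({..<t} \<union> {0}))"

definition part :: "real \<Rightarrow> nat \<Rightarrow> real \<Rightarrow> real \<Rightarrow> real list" where
  "part T K t s = sorted_list_of_set
     ({t, s} \<union> {T * real k / real K | k. k \<le> K \<and> t < T * real k / real K \<and> T * real k / real K < s})"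

text \<open>stochastic integral of a left-continuous step integrand H (constant on each
  (P!i, P!(i+1)]) against the driving path Z\<close>
definition simple_int :: "real list \<Rightarrow> (real \<Rightarrow> real^'d^'d) \<Rightarrow> (real \<Rightarrow> real^'d) \<Rightarrow> real^'d" where
  "simple_int P H Z = (\<Sum>i < length P - 1. H (P ! Suc i) *v (Z (P ! Suc i) - Z (P ! i)))"

text \<open>X solves the (piecewise-frozen) SDE on [t,T] started at x, driven by Brownian path Wp and
  by the path Jp of the compensated Poisson integral of G (the jump coefficient being F(y) G(z)).\<close>
definition euler_eq ::
  "real \<Rightarrow> nat \<Rightarrow> (real^'d \<Rightarrow> real^'d) \<Rightarrow> (real^'d \<Rightarrow> real^'d^'d) \<Rightarrow> (real^'d \<Rightarrow> real^'d^'d)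
   \<Rightarrow> (real \<Rightarrow> real^'d) \<Rightarrow> (real \<Rightarrow> real^'d) \<Rightarrow> real \<Rightarrow> real^'d \<Rightarrow> (real \<Rightarrow> real^'d) \<Rightarrow> bool" where
  "euler_eq T K b s F Wp Jp t x X \<longleftrightarrow>
    (\<forall>r\<in>{t..T}. X r = x
        + integral {t..r} (\<lambda>u. b (X (max t (flr T K u))))
        + simple_int (part T K t r) (\<lambda>u. s (X (max t (flr T K u)))) Wp
        + simple_int (part T K t r) (\<lambda>u. F (X (max t (flr T K u)))) Jp)"

end

theory Submission
  imports Defs
begin

(* A ReLU network can carry a vector y through a hidden layer as the pair (y, -y), because
   y = relu y - relu (-y) is then recovered by the next affine layer.  This lets one Euler step
   y + \<Delta> b(y) + \<sigma>(y) \<Delta>W + F(y) \<Delta>J be realized by running the identity and the networks for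
   \<Delta> b, \<sigma>(.) \<Delta>W and F(.) \<Delta>J in parallel, the shallower ones deepened by identity layers, and
   summing their outputs; the K steps of the scheme are then composed.  The networks for
   \<sigma>(.) v and F(.) v have an architecture independent of v, and the partition of [t, s] has at most
   K intervals (further steps are identity steps with zero increments), so the architecture of the
   result depends only on K and the three coefficient architectures. *)

type_synonym layer = "real list list \<times> real list"

definition dot :: "real list \<Rightarrow> real list \<Rightarrow> real" where
  "dot r x = sum_list (map2 (*) r x)"

definition relu :: "real list \<Rightarrow> real list" where
  "relu xs = map (\<lambda>y. max 0 y) xs"

definition affine :: "layer \<Rightarrow> real list \<Rightarrow> real list" where
  "affine L x = map2 (+) (mv (fst L) x) (snd L)"

definition neg_list :: "real list \<Rightarrow> real list" where
  "neg_list = map uminus"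

definition zeros :: "nat \<Rightarrow> real list" where
  "zeros n = replicate n 0"

definition unit_row :: "nat \<Rightarrow> nat \<Rightarrow> real list" where
  "unit_row n i = map (\<lambda>j. if j = i then 1 else 0) [0..<n]"

definition id_mat :: "nat \<Rightarrow> real list list" where
  "id_mat n = map (unit_row n) [0..<n]"

lemma mv_dot: "mv W x = map (\<lambda>r. dot r x) W"
  by (simp add: mv_def dot_def)

lemma dot_nth: "dot r x = (\<Sum>j<min (length r) (length x). r ! j * x ! j)"
  unfolding dot_def sum_list_sum_nth
  by (auto intro!: sum.cong simp: atLeast0LessThan)

lemma dot_append: "length r1 = length x1 \<Longrightarrow> dot (r1 @ r2) (x1 @ x2) = dot r1 x1 + dot r2 x2"
  by (simp add: dot_def)

lemma dot_zeros: "dot (zeros n) x = 0"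
  by (simp add: dot_nth zeros_def)

lemma dot_neg: "dot (neg_list r) x = - dot r x"
  by (simp add: dot_nth neg_list_def sum_negf)

lemma dot_scale: "dot (map ((*) c) r) x = c * dot r x"
  by (simp add: dot_nth sum_distrib_left mult.assoc)

lemma dot_diff: "length a = length b \<Longrightarrow> dot r a - dot r b = dot r (map2 (-) a b)"
  by (simp add: dot_nth sum_subtractf[symmetric] right_diff_distrib)

lemma dot_unit:
  assumes a: "i < n" "length x = n"
  shows "dot (unit_row n i) x = x ! i"
proof -
  have "dot (unit_row n i) x = (\<Sum>j<n. if j = i then x ! j else 0)"
    unfolding dot_nth using a by (intro sum.cong) (auto simp: unit_row_def)
  also have "\<dots> = x ! i" using a by simp
  finally show ?thesis .
qed

lemma mv_id_mat: "length x = n \<Longrightarrow> mv (id_mat n) x = x"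
  by (auto simp: mv_dot id_mat_def dot_unit intro!: nth_equalityI)

lemma length_neg_list[simp]: "length (neg_list x) = length x"
  by (simp add: neg_list_def)

lemma length_zeros[simp]: "length (zeros n) = n"
  by (simp add: zeros_def)

lemma length_unit_row[simp]: "length (unit_row n i) = n"
  by (simp add: unit_row_def)

lemma length_affine: "length (affine L x) = min (length (fst L)) (length (snd L))"
  by (simp add: affine_def mv_def)

lemma length_relu[simp]: "length (relu x) = length x"
  by (simp add: relu_def)

lemma relu_append: "relu (a @ b) = relu a @ relu b"
  by (simp add: relu_def)

lemma relu_nonneg: "\<forall>y\<in>set a. 0 \<le> y \<Longrightarrow> relu a = a"
  by (simp add: relu_def map_idI)

lemma relu_diff: "map2 (-) (relu y) (relu (neg_list y)) = y"
  by (auto simp: relu_def neg_list_def intro!: nth_equalityI)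

lemma affine_id_layer: "length z = n \<Longrightarrow> affine (id_mat n, zeros n) z = z"
  by (auto simp: affine_def mv_id_mat zeros_def intro!: nth_equalityI)

lemma realize_Cons: "realize (L # A) x = (if A = [] then affine L x else realize A (relu (affine L x)))"
  by (cases L; cases A) (auto simp: affine_def relu_def)

lemma realize_append: "A \<noteq> [] \<Longrightarrow> B \<noteq> [] \<Longrightarrow> realize (A @ B) x = realize B (relu (realize A x))"
proof (induction A arbitrary: x)
  case Nil then show ?case by simp
next
  case (Cons L A)
  show ?case
  proof (cases "A = []")
    case True then show ?thesis using Cons by (simp add: realize_Cons)
  next
    case False then show ?thesis using Cons by (simp add: realize_Cons)
  qed
qed

lemma realize_snoc: "realize (A @ [L]) x = affine L (if A = [] then x else relu (realize A x))"
  by (cases "A = []") (auto simp: realize_Cons realize_append)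

fun composable :: "nat \<Rightarrow> net \<Rightarrow> bool" where
  "composable n [] = True"
| "composable n (L # A) = (length (fst L) = length (snd L) \<and> (\<forall>r\<in>set (fst L). length r = n) \<and>
  composable (length (snd L)) A)"

definition widths :: "net \<Rightarrow> nat list" where
  "widths A = map (\<lambda>L. length (snd L)) A"

lemma widths_simps[simp]:
  "widths [] = []" "widths (L # A) = length (snd L) # widths A" "widths (A @ B) = widths A @ widths B"
  "length (widths A) = length A" "widths A = [] \<longleftrightarrow> A = []"
  by (auto simp: widths_def)

lemma widths_replicate: "widths (replicate m L) = replicate m (length (snd L))"
  by (simp add: widths_def)

lemma composable_append: "composable n (A @ B) \<longleftrightarrow> composable n A \<and> composable (last (n # widths A)) B"
  by (induction A arbitrary: n) auto

lemma composable_last: "composable n A \<Longrightarrow> A \<noteq> [] \<Longrightarrow> length (fst (last A)) = length (snd (last A))"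
  by (induction A arbitrary: n) auto

lemma length_realize: "composable n A \<Longrightarrow> A \<noteq> [] \<Longrightarrow> length (realize A x) = last (widths A)"
proof (induction A arbitrary: n x)
  case Nil then show ?case by simp
next
  case (Cons L A) then show ?case by (auto simp: realize_Cons length_affine)
qed

lemma composable_iff: "composable n A \<longleftrightarrow> (\<forall>m<length A. length (fst (A!m)) = (n # widths A) ! Suc m \<and>
    (\<forall>row\<in>set (fst (A!m)). length row = (n # widths A) ! m))"
proof (induction A arbitrary: n)
  case Nil then show ?case by simp
next
  case (Cons L A)
  show ?case
    unfolding composable.simps Cons.IH by (auto simp: less_Suc_eq_0_disj)
qed

lemma dims_eq_widths: "A \<noteq> [] \<Longrightarrow> dims A = length (hd (fst (hd A))) # widths A"
  by (cases A) (auto simp: dims_def widths_def case_prod_beta)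

lemma length_dims: "A \<noteq> [] \<Longrightarrow> length (dims A) = Suc (length A)"
  by (cases A) (auto simp: dims_def)

definition valid_net :: "nat \<Rightarrow> nat \<Rightarrow> net \<Rightarrow> bool" where
  "valid_net n k A \<longleftrightarrow> A \<noteq> [] \<and> composable n A \<and> last (widths A) = k \<and> (\<forall>x\<in>set (widths A). 1 \<le> x)"

lemma wf_netI:
  assumes a: "composable n A" "2 \<le> length A" "1 \<le> n" "\<forall>x\<in>set (widths A). 1 \<le> x"
  shows "wf_net A \<and> dims A = n # widths A"
proof -
  obtain L A' where A: "A = L # A'" using a by (cases A) auto
  have "1 \<le> length (snd L)" using a A by auto
  then have "fst L \<noteq> []" using a A by auto
  then have "length (hd (fst L)) = n" using a A by auto
  then have d: "dims A = n # widths A" using dims_eq_widths[of A] A by simp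
  show ?thesis unfolding wf_net_def d using a composable_iff[of n A] by auto
qed

lemma wf_netD:
  assumes a: "wf_net A"
  shows "composable (hd (dims A)) A \<and> dims A = hd (dims A) # widths A \<and> 2 \<le> length A \<and>
   (\<forall>x\<in>set (widths A). 1 \<le> x) \<and> 1 \<le> hd (dims A)"
proof -
  have ne: "A \<noteq> []" using a by (auto simp: wf_net_def)
  have d: "dims A = hd (dims A) # widths A" using dims_eq_widths[OF ne] by simp
  have "composable (hd (dims A)) A" using a composable_iff[of "hd (dims A)" A] d unfolding wf_net_def
    by metis
  then show ?thesis using a d unfolding wf_net_def by (metis list.set_intros)
qed

section \<open>Passing a sign through a ReLU\<close>

definition neg_dup_layer :: "layer \<Rightarrow> layer" where
  "neg_dup_layer L = (fst L @ map neg_list (fst L), snd L @ neg_list (snd L))"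

definition with_neg_output :: "net \<Rightarrow> net" where
  "with_neg_output A = butlast A @ [neg_dup_layer (last A)]"

lemma affine_neg_dup_layer: "length (fst L) = length (snd L) \<Longrightarrow>
  affine (neg_dup_layer L) x = affine L x @ neg_list (affine L x)"
  by (auto simp: affine_def mv_dot neg_dup_layer_def neg_list_def nth_append dot_neg
    dot_neg[unfolded neg_list_def] intro!: nth_equalityI)

lemma realize_with_neg_output:
  assumes a: "A \<noteq> []" "composable n A"
  shows "realize (with_neg_output A) x = realize A x @ neg_list (realize A x)"
proof -
  have e: "A = butlast A @ [last A]" using a by simp
  have "realize A x = affine (last A) (if butlast A = [] then x else relu (realize (butlast A) x))"
    by (subst e, subst realize_snoc) simp
  then show ?thesis unfolding with_neg_output_def realize_snoc
    using affine_neg_dup_layer composable_last[OF a(2) a(1)] by simp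
qed

lemma widths_with_neg_output: "A \<noteq> [] \<Longrightarrow>
  widths (with_neg_output A) = butlast (widths A) @ [2 * last (widths A)]"
  by (simp add: with_neg_output_def neg_dup_layer_def widths_def map_butlast last_map)

lemma with_neg_output_not_Nil[simp]: "with_neg_output A \<noteq> []"
  by (simp add: with_neg_output_def)

lemma length_with_neg_output[simp]: "A \<noteq> [] \<Longrightarrow> length (with_neg_output A) = length A"
  by (simp add: with_neg_output_def)

lemma composable_with_neg_output:
  assumes a: "composable n A" "A \<noteq> []"
  shows "composable n (with_neg_output A)"
proof -
  have e: "A = butlast A @ [last A]" using a by simp
  have "composable n (butlast A @ [last A])" using a e by simp
  then show ?thesis unfolding with_neg_output_def composable_append
    by (auto simp: neg_dup_layer_def neg_list_def)
qed

definition split_input_layer :: "layer \<Rightarrow> layer" where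
  "split_input_layer L = (map (\<lambda>r. r @ neg_list r) (fst L), snd L)"

definition with_split_input :: "net \<Rightarrow> net" where
  "with_split_input A = (case A of [] \<Rightarrow> [] | L # A' \<Rightarrow> split_input_layer L # A')"

lemma affine_split_input_layer:
  assumes a: "\<forall>r\<in>set (fst L). length r = length y"
  shows "affine (split_input_layer L) (relu y @ relu (neg_list y)) = affine L y"
proof -
  have "dot (r @ neg_list r) (relu y @ relu (neg_list y)) = dot r y" if "r \<in> set (fst L)" for r
    using a that by (simp add: dot_append dot_neg dot_diff relu_diff)
  then have m: "map (\<lambda>r. dot (r @ neg_list r) (relu y @ relu (neg_list y))) (fst L)
    = map (\<lambda>r. dot r y) (fst L)"
    by (intro map_cong) auto
  show ?thesis unfolding affine_def split_input_layer_def mv_dot fst_conv snd_conv map_map o_def m ..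
qed

lemma realize_with_split_input: "composable n A \<Longrightarrow> A \<noteq> [] \<Longrightarrow> length y = n \<Longrightarrow>
  realize (with_split_input A) (relu y @ relu (neg_list y)) = realize A y"
  by (cases A) (auto simp: with_split_input_def realize_Cons affine_split_input_layer)

lemma composable_with_split_input: "composable n A \<Longrightarrow> composable (2 * n) (with_split_input A)"
  by (cases A) (auto simp: with_split_input_def split_input_layer_def)

lemma widths_with_split_input[simp]: "widths (with_split_input A) = widths A"
  by (cases A) (auto simp: with_split_input_def split_input_layer_def)

lemma length_with_split_input[simp]: "length (with_split_input A) = length A"
  by (cases A) (auto simp: with_split_input_def)

(* The ReLU after Q turns y @ -y into relu y @ relu (-y), from which the first layer of
   with_split_input B recovers y. *)
lemma glue_with_split_input:
  assumes Q: "Q \<noteq> []" "composable d Q" "last (widths Q) = 2 * d" "realize Q x = y @ neg_list y"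
    and y: "length y = d" and B: "composable d B" "B \<noteq> []"
  shows "composable d (Q @ with_split_input B)" "realize (Q @ with_split_input B) x = realize B y"
proof -
  have "with_split_input B \<noteq> []" using B(2) by (cases B) (auto simp: with_split_input_def)
  then show "realize (Q @ with_split_input B) x = realize B y"
    using Q realize_with_split_input[OF B(1,2) y] by (simp add: realize_append relu_append)
  show "composable d (Q @ with_split_input B)"
    unfolding composable_append using Q composable_with_split_input[OF B(1)] by simp
qed

section \<open>Deepening a network\<close>

definition split_join_mat :: "nat \<Rightarrow> real list list" where
  "split_join_mat k = map (\<lambda>i. unit_row k i @ neg_list (unit_row k i)) [0..<k]"

definition deepen :: "net \<Rightarrow> nat \<Rightarrow> net" where
  "deepen A j = with_neg_output A @ replicate (j - 1) (id_mat (2 * last (widths A)),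
    zeros (2 * last (widths A)))
      @ [(split_join_mat (last (widths A)), zeros (last (widths A)))]"

lemma realize_id_layers: "\<forall>y\<in>set z. 0 \<le> y \<Longrightarrow> length z = n \<Longrightarrow>
    realize (replicate m (id_mat n, zeros n) @ [L]) z = affine L z"
proof (induction m)
  case 0 then show ?case by (simp add: realize_Cons)
next
  case (Suc m)
  then show ?case by (simp add: realize_Cons affine_id_layer relu_nonneg)
qed

lemma affine_split_join: "length p = k \<Longrightarrow> length q = k \<Longrightarrow>
  affine (split_join_mat k, zeros k) (p @ q) = map2 (-) p q"
proof (rule nth_equalityI)
  assume a: "length p = k" "length q = k"
  show "length (affine (split_join_mat k, zeros k) (p @ q)) = length (map2 (-) p q)"
    using a by (simp add: length_affine split_join_mat_def zeros_def)
  fix i assume "i < length (affine (split_join_mat k, zeros k) (p @ q))"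
  then have i: "i < k" by (simp add: length_affine split_join_mat_def zeros_def)
  have "affine (split_join_mat k, zeros k) (p @ q) ! i
      = dot (unit_row k i @ neg_list (unit_row k i)) (p @ q)"
    using i by (simp add: affine_def mv_dot split_join_mat_def zeros_def)
  also have "\<dots> = p ! i - q ! i" using i a by (simp add: dot_append dot_neg dot_unit)
  finally show "affine (split_join_mat k, zeros k) (p @ q) ! i = map2 (-) p q ! i" using i a by simp
qed

lemma realize_deepen:
  assumes a: "composable n A" "A \<noteq> []" "1 \<le> j"
  shows "realize (deepen A j) x = realize A x"
proof -
  define y where "y = realize A x"
  define k where "k = last (widths A)"
  have ly: "length y = k" unfolding y_def k_def using length_realize[OF a(1,2)] .
  have "realize (deepen A j) x = realize (replicate (j - 1) (id_mat (2 * k), zeros (2 * k))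
      @ [(split_join_mat k, zeros k)]) (relu (realize (with_neg_output A) x))"
    unfolding deepen_def k_def by (subst realize_append) (auto simp: with_neg_output_def)
  also have "relu (realize (with_neg_output A) x) = relu y @ relu (neg_list y)"
    using realize_with_neg_output[OF a(2,1)] by (simp add: y_def relu_append)
  also have "realize (replicate (j - 1) (id_mat (2 * k), zeros (2 * k)) @ [(split_join_mat k, zeros k)])
      (relu y @ relu (neg_list y)) = affine (split_join_mat k, zeros k) (relu y @ relu (neg_list y))"
    by (rule realize_id_layers) (auto simp: ly relu_def)
  also have "\<dots> = y" using ly by (simp add: affine_split_join relu_diff)
  finally show ?thesis by (simp add: y_def)
qed

lemma composable_id_layers: "composable (2 * k) (replicate m (id_mat (2 * k), zeros (2 * k))
    @ [(split_join_mat k, zeros k)])"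
  by (induction m) (auto simp: id_mat_def zeros_def split_join_mat_def)

lemma composable_deepen:
  assumes a: "composable n A" "A \<noteq> []"
  shows "composable n (deepen A j)"
proof -
  have "last (n # widths (with_neg_output A)) = 2 * last (widths A)" using a
    by (simp add: widths_with_neg_output)
  then show ?thesis unfolding deepen_def composable_append[of n "with_neg_output A"]
    using composable_with_neg_output[OF a] composable_id_layers[of "last (widths A)" "j - 1"] by simp
qed

lemma widths_deepen:
  assumes a: "A \<noteq> []" "1 \<le> j"
  shows "widths (deepen A j) = butlast (widths A) @ replicate j (2 * last (widths A)) @ [last (widths A)]"
proof -
  obtain j' where j: "j = Suc j'" using a by (cases j) auto
  show ?thesis using a
    by (simp add: j deepen_def widths_with_neg_output split_join_mat_def zeros_def widths_replicate)
qed

lemma length_deepen: "A \<noteq> [] \<Longrightarrow> 1 \<le> j \<Longrightarrow> length (deepen A j) = length A + j"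
  by (simp add: deepen_def with_neg_output_def)

section \<open>Parallel sums\<close>

definition stack_layer :: "layer \<Rightarrow> layer \<Rightarrow> layer" where
  "stack_layer L1 L2 = (fst L1 @ fst L2, snd L1 @ snd L2)"

definition blockdiag_layer :: "nat \<Rightarrow> nat \<Rightarrow> layer \<Rightarrow> layer \<Rightarrow> layer" where
  "blockdiag_layer n1 n2 L1 L2 = (map (\<lambda>r. r @ zeros n2) (fst L1)
    @ map (\<lambda>r. zeros n1 @ r) (fst L2), snd L1 @ snd L2)"

definition join_layer :: "layer \<Rightarrow> layer \<Rightarrow> layer" where
  "join_layer L1 L2 = (map2 (@) (fst L1) (fst L2), map2 (+) (snd L1) (snd L2))"

fun par_tail :: "nat \<Rightarrow> nat \<Rightarrow> net \<Rightarrow> net \<Rightarrow> net" where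
  "par_tail n1 n2 (L1 # A) (L2 # B) = (if A = [] then [join_layer L1 L2]
      else blockdiag_layer n1 n2 L1 L2 # par_tail (length (snd L1)) (length (snd L2)) A B)"
| "par_tail n1 n2 _ _ = []"

fun par_sum :: "net \<Rightarrow> net \<Rightarrow> net" where
  "par_sum (L1 # A) (L2 # B) = stack_layer L1 L2 # par_tail (length (snd L1)) (length (snd L2)) A B"
| "par_sum _ _ = []"

fun par_widths :: "nat list \<Rightarrow> nat list \<Rightarrow> nat list" where
  "par_widths (a # as) (b # bs) = (if as = [] then [min a b] else (a + b) # par_widths as bs)"
| "par_widths _ _ = []"

lemma affine_stack_layer: "length (fst L1) = length (snd L1) \<Longrightarrow>
  affine (stack_layer L1 L2) x = affine L1 x @ affine L2 x"
  by (simp add: affine_def stack_layer_def mv_def)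

lemma affine_blockdiag_layer:
  assumes a: "length x1 = n1" "length x2 = n2" "\<forall>r\<in>set (fst L1). length r = n1" "\<forall>r\<in>set (fst L2). length r = n2" "length (fst L1) = length (snd L1)"
  shows "affine (blockdiag_layer n1 n2 L1 L2) (x1 @ x2) = affine L1 x1 @ affine L2 x2"
proof -
  have m1: "map (\<lambda>r. dot (r @ zeros n2) (x1 @ x2)) (fst L1) = map (\<lambda>r. dot r x1) (fst L1)"
    using a by (auto simp: dot_append dot_zeros)
  have m2: "map (\<lambda>r. dot (zeros n1 @ r) (x1 @ x2)) (fst L2) = map (\<lambda>r. dot r x2) (fst L2)"
    using a by (auto simp: dot_append dot_zeros)
  show ?thesis unfolding affine_def blockdiag_layer_def using a
    by (simp add: mv_dot o_def m1 m2)
qed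

lemma affine_join_layer: "length x1 = n1 \<Longrightarrow> \<forall>r\<in>set (fst L1). length r = n1 \<Longrightarrow>
  affine (join_layer L1 L2) (x1 @ x2) = map2 (+) (affine L1 x1) (affine L2 x2)"
proof (rule nth_equalityI)
  assume a: "length x1 = n1" "\<forall>r\<in>set (fst L1). length r = n1"
  show "length (affine (join_layer L1 L2) (x1 @ x2)) = length (map2 (+) (affine L1 x1) (affine L2 x2))"
    by (simp add: length_affine join_layer_def)
  fix i assume "i < length (affine (join_layer L1 L2) (x1 @ x2))"
  then have i: "i < length (fst L1)" "i < length (fst L2)" "i < length (snd L1)" "i < length (snd L2)"
    by (auto simp: length_affine join_layer_def)
  have "length (fst L1 ! i) = length x1" using a i by auto
  then show "affine (join_layer L1 L2) (x1 @ x2) ! i = map2 (+) (affine L1 x1) (affine L2 x2) ! i"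
    using i by (simp add: affine_def join_layer_def mv_dot dot_append)
qed

lemma composable_par_tail: "composable n1 A \<Longrightarrow> composable n2 B \<Longrightarrow> length A = length B \<Longrightarrow>
  composable (n1 + n2) (par_tail n1 n2 A B)"
proof (induction n1 n2 A B rule: par_tail.induct)
  case (1 n1 n2 L1 A L2 B)
  show ?case
  proof (cases "A = []")
    case True
    then show ?thesis using 1 by (auto simp: join_layer_def set_zip)
  next
    case False
    then show ?thesis using 1 by (auto simp: blockdiag_layer_def)
  qed
qed auto

lemma realize_par_tail: "composable n1 A \<Longrightarrow> composable n2 B \<Longrightarrow> length A = length B \<Longrightarrow> A \<noteq> [] \<Longrightarrow>
  length x1 = n1 \<Longrightarrow> length x2 = n2 \<Longrightarrow>
  realize (par_tail n1 n2 A B) (x1 @ x2) = map2 (+) (realize A x1) (realize B x2)"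
proof (induction n1 n2 A B arbitrary: x1 x2 rule: par_tail.induct)
  case (1 n1 n2 L1 A L2 B)
  show ?case
  proof (cases "A = []")
    case True
    then show ?thesis using 1 by (simp add: realize_Cons affine_join_layer)
  next
    case False
    then have "B \<noteq> []" using 1 by auto
    have ne: "par_tail (length (snd L1)) (length (snd L2)) A B \<noteq> []"
      using False \<open>B \<noteq> []\<close> by (cases A; cases B) auto
    have "realize (par_tail n1 n2 (L1 # A) (L2 # B)) (x1 @ x2) =
        realize (par_tail (length (snd L1)) (length (snd L2)) A B)
          (relu (affine L1 x1) @ relu (affine L2 x2))"
      using False ne 1(2-) by (simp add: realize_Cons affine_blockdiag_layer relu_append)
    also have "\<dots> = map2 (+) (realize A (relu (affine L1 x1))) (realize B (relu (affine L2 x2)))"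
      using 1 False by (intro 1(1)) (auto simp: length_affine)
    finally show ?thesis using False \<open>B \<noteq> []\<close> by (simp add: realize_Cons)
  qed
qed auto

lemma widths_par_tail: "length A = length B \<Longrightarrow>
  widths (par_tail n1 n2 A B) = par_widths (widths A) (widths B)"
  by (induction n1 n2 A B rule: par_tail.induct) (auto simp: join_layer_def blockdiag_layer_def)

lemma widths_par_sum: "length A = length B \<Longrightarrow> 2 \<le> length A \<Longrightarrow>
  widths (par_sum A B) = par_widths (widths A) (widths B)"
  apply (cases A; cases B)
  by (auto simp: widths_par_tail stack_layer_def)

lemma par_widths_mem: "x \<in> set (par_widths as bs) \<Longrightarrow> \<exists>a\<in>set as. \<exists>b\<in>set bs. min a b \<le> x \<and> x \<le> a + b"
  by (induction as bs rule: par_widths.induct) (auto split: if_splits)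

lemma last_par_widths: "length as = length bs \<Longrightarrow> as \<noteq> [] \<Longrightarrow> last (par_widths as bs) = min (last as) (last bs)"
proof (induction as bs rule: par_widths.induct)
  case (1 a as b bs)
  then show ?case by (cases as; cases bs) auto
qed auto

lemma length_par_widths: "length as = length bs \<Longrightarrow> length (par_widths as bs) = length as"
  by (induction as bs rule: par_widths.induct) auto

lemma realize_par_sum:
  assumes "composable n A" "composable n B" "length A = length B" "2 \<le> length A" "length x = n"
  shows "realize (par_sum A B) x = map2 (+) (realize A x) (realize B x)"
proof -
  obtain L1 A' L2 B' where AB: "A = L1 # A'" "B = L2 # B'"
    using assms(3,4) by (cases A; cases B) auto
  then have "A' \<noteq> []" "B' \<noteq> []" using assms(3,4) by auto
  have "par_tail (length (snd L1)) (length (snd L2)) A' B' \<noteq> []"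
    using \<open>A' \<noteq> []\<close> \<open>B' \<noteq> []\<close> by (cases A'; cases B') auto
  then have "realize (par_sum A B) x
      = realize (par_tail (length (snd L1)) (length (snd L2)) A' B')
        (relu (affine L1 x) @ relu (affine L2 x))"
    using assms(1,2) by (simp add: AB realize_Cons affine_stack_layer relu_append)
  also have "\<dots> = map2 (+) (realize A' (relu (affine L1 x))) (realize B' (relu (affine L2 x)))"
    using assms AB \<open>A' \<noteq> []\<close> by (intro realize_par_tail) (auto simp: length_affine)
  finally show ?thesis using AB \<open>A' \<noteq> []\<close> \<open>B' \<noteq> []\<close> by (simp add: realize_Cons)
qed

lemma valid_net_par_sum:
  assumes A: "valid_net n k A" and B: "valid_net n k B" and len: "length A = length B" "2 \<le> length A"
  shows "valid_net n k (par_sum A B)" "length (par_sum A B) = length A"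
proof -
  obtain L1 A' L2 B' where AB: "A = L1 # A'" "B = L2 # B'" using len by (cases A; cases B) auto
  have ws: "widths (par_sum A B) = par_widths (widths A) (widths B)" using widths_par_sum len by simp
  have "composable n (par_sum A B)"
    using A B len composable_par_tail[of "length (snd L1)" A' "length (snd L2)" B']
    by (auto simp: AB stack_layer_def valid_net_def)
  moreover have "\<forall>x\<in>set (widths (par_sum A B)). 1 \<le> x"
  proof
    fix x assume "x \<in> set (widths (par_sum A B))"
    then obtain p q where "p \<in> set (widths A)" "q \<in> set (widths B)" "min p q \<le> x"
      using par_widths_mem ws by fastforce
    moreover have "1 \<le> p" "1 \<le> q" using A B \<open>p \<in> set (widths A)\<close> \<open>q \<in> set (widths B)\<close>
      by (auto simp: valid_net_def)
    ultimately show "1 \<le> x" by linarith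
  qed
  moreover have "last (widths (par_sum A B)) = k"
    using ws last_par_widths[of "widths A" "widths B"] A B len by (auto simp: valid_net_def AB)
  ultimately show "valid_net n k (par_sum A B)" by (simp add: valid_net_def AB)
  show "length (par_sum A B) = length A"
    using ws length_par_widths[of "widths A" "widths B"] len by (metis widths_simps(4))
qed

definition deepen_to :: "nat \<Rightarrow> net \<Rightarrow> net" where
  "deepen_to l A = (if length A < l then deepen A (l - length A) else A)"

definition par_sum_aligned :: "net \<Rightarrow> net \<Rightarrow> net" where
  "par_sum_aligned A B = (let l = max (length A) (length B) in par_sum (deepen_to l A) (deepen_to l B))"

definition deepen_widths :: "nat \<Rightarrow> nat list \<Rightarrow> nat list" where
  "deepen_widths l as = (if length as < l then
    butlast as @ replicate (l - length as) (2 * last as) @ [last as] else as)"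

definition par_sum_aligned_widths :: "nat list \<Rightarrow> nat list \<Rightarrow> nat list" where
  "par_sum_aligned_widths as bs = (let l = max (length as) (length bs)
    in par_widths (deepen_widths l as) (deepen_widths l bs))"

lemma valid_net_deepen_to: "valid_net n k A \<Longrightarrow>
  valid_net n k (deepen_to l A) \<and> length (deepen_to l A) = max (length A) l \<and>
   (\<forall>x. realize (deepen_to l A) x = realize A x) \<and> widths (deepen_to l A) = deepen_widths l (widths A)"
proof (cases "length A < l")
  case True
  assume a: "valid_net n k A"
  have ne: "A \<noteq> []" and c: "composable n A" and k: "last (widths A) = k" and pos: "\<forall>x\<in>set (widths A). 1 \<le> x"
    using a by (auto simp: valid_net_def)
  have k1: "1 \<le> k" using pos k ne by (metis last_in_set widths_simps(5))
  have j: "1 \<le> l - length A" using True by simp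
  have lp: "widths (deepen A (l - length A)) = butlast (widths A) @ replicate (l - length A) (2 * k) @ [k]"
    using widths_deepen[OF ne j] k by simp
  have "length (deepen A (l - length A)) \<noteq> 0" using length_deepen[OF ne j] True by simp
  then have "deepen A (l - length A) \<noteq> []" by (metis list.size(3))
  then have "valid_net n k (deepen A (l - length A))"
    unfolding valid_net_def using composable_deepen[OF c ne] lp pos k1
    by (auto dest: in_set_butlastD)
  then show ?thesis using True realize_deepen[OF c ne j] length_deepen[OF ne j] widths_deepen[OF ne j]
    by (simp add: deepen_to_def deepen_widths_def)
next
  case False
  assume "valid_net n k A"
  then show ?thesis using False by (simp add: deepen_to_def deepen_widths_def)
qed

lemma valid_net_par_sum_aligned:
  assumes A: "valid_net n k A" and B: "valid_net n k B" and len: "2 \<le> max (length A) (length B)"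
  shows "valid_net n k (par_sum_aligned A B) \<and> length (par_sum_aligned A B) = max (length A) (length B) \<and>
    (\<forall>x. length x = n \<longrightarrow> realize (par_sum_aligned A B) x = map2 (+) (realize A x) (realize B x)) \<and>
    widths (par_sum_aligned A B) = par_sum_aligned_widths (widths A) (widths B)"
proof -
  define l where "l = max (length A) (length B)"
  note A' = valid_net_deepen_to[OF A, of l] and B' = valid_net_deepen_to[OF B, of l]
  have lens: "length (deepen_to l A) = l" "length (deepen_to l B) = l" "2 \<le> l"
    using A' B' len by (auto simp: l_def)
  have "composable n (deepen_to l A)" "composable n (deepen_to l B)"
    using A' B' by (simp_all add: valid_net_def)
  note sum = valid_net_par_sum[OF A'[THEN conjunct1] B'[THEN conjunct1]] realize_par_sum[OF this]
  show ?thesis using sum A' B' lens widths_par_sum[of "deepen_to l A" "deepen_to l B"]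
    unfolding par_sum_aligned_def par_sum_aligned_widths_def l_def[symmetric] by (simp add: Let_def l_def)
qed

definition id_net :: "nat \<Rightarrow> net" where
  "id_net n = [(id_mat n, zeros n)]"

lemma valid_net_id_net: "1 \<le> n \<Longrightarrow> valid_net n n (id_net n)"
  by (auto simp: valid_net_def id_net_def id_mat_def)

lemma realize_id_net: "length x = n \<Longrightarrow> realize (id_net n) x = x"
  by (simp add: id_net_def affine_id_layer realize_Cons)

lemma valid_net_foldl_par_sum:
  "valid_net n n A \<Longrightarrow> \<forall>N\<in>set Ns. valid_net n n N \<and> 2 \<le> length N \<Longrightarrow>
    valid_net n n (foldl par_sum_aligned A Ns) \<and>
    length (foldl par_sum_aligned A Ns) = foldl max (length A) (map length Ns) \<and>
    (\<forall>x. length x = n \<longrightarrow> realize (foldl par_sum_aligned A Ns) x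
      = foldl (\<lambda>a N. map2 (+) a (realize N x)) (realize A x) Ns) \<and>
    widths (foldl par_sum_aligned A Ns) = foldl par_sum_aligned_widths (widths A) (map widths Ns)"
proof (induction Ns arbitrary: A)
  case Nil then show ?case by simp
next
  case (Cons N Ns)
  have "2 \<le> max (length A) (length N)" using Cons by auto
  note p = valid_net_par_sum_aligned[OF Cons(2) _ this]
  show ?case using Cons(1)[of "par_sum_aligned A N"] p Cons(2,3) by auto
qed

lemma widths_foldl_par_sum_le:
  "valid_net d d A \<Longrightarrow> \<forall>x\<in>set (widths A). x \<le> 2 * d + S \<Longrightarrow>
    \<forall>N\<in>set Ns. valid_net d d N \<and> 2 \<le> length N \<and> length A \<le> length N \<Longrightarrow>
    sorted (map length Ns) \<Longrightarrow>
    \<forall>x\<in>set (widths (foldl par_sum_aligned A Ns)).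
      x \<le> 2 * d + S + sum_list (map (\<lambda>N. Max (set (widths N))) Ns)"
proof (induction Ns arbitrary: A S)
  case Nil then show ?case by simp
next
  case (Cons N Ns)
  have oN: "valid_net d d N" "2 \<le> length N" "length A \<le> length N" using Cons(4) by auto
  have mx: "2 \<le> max (length A) (length N)" using oN by auto
  note p = valid_net_par_sum_aligned[OF Cons(2) oN(1) mx]
  define M where "M = Max (set (widths N))"
  have lA: "last (widths A) = d" "A \<noteq> []" using Cons(2) by (auto simp: valid_net_def)
  have b1: "\<forall>x\<in>set (deepen_widths (length N) (widths A)). x \<le> 2 * d + S"
    using Cons(3) lA by (auto simp: deepen_widths_def dest: in_set_butlastD)
  have b2: "\<forall>x\<in>set (widths N). x \<le> M" unfolding M_def by auto
  have e: "widths (par_sum_aligned A N) = par_widths (deepen_widths (length N) (widths A)) (widths N)"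
    using p oN(3) by (simp add: par_sum_aligned_widths_def deepen_widths_def max_def)
  have b: "\<forall>x\<in>set (widths (par_sum_aligned A N)). x \<le> 2 * d + (S + M)"
  proof
    fix x assume "x \<in> set (widths (par_sum_aligned A N))"
    then obtain a b where "a \<in> set (deepen_widths (length N) (widths A))" "b \<in> set (widths N)" "x \<le> a + b"
      using par_widths_mem e by fastforce
    then show "x \<le> 2 * d + (S + M)" using b1 b2 by fastforce
  qed
  have len: "length (par_sum_aligned A N) = length N" using p oN by simp
  have "\<forall>N'\<in>set Ns. valid_net d d N' \<and> 2 \<le> length N' \<and> length (par_sum_aligned A N) \<le> length N'"
    using Cons(4,5) len by auto
  from Cons(1)[OF p[THEN conjunct1] b this] Cons(5)
  show ?case by (simp add: M_def add.assoc)
qed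

definition scale_net :: "real \<Rightarrow> net \<Rightarrow> net" where
  "scale_net c A = butlast A @ [(map (map ((*) c)) (fst (last A)), map ((*) c) (snd (last A)))]"

lemma affine_scale_layer: "affine (map (map ((*) c)) (fst L), map ((*) c) (snd L)) z
  = map ((*) c) (affine L z)"
  by (auto simp: affine_def mv_dot dot_scale[unfolded dot_def] dot_def distrib_left intro!: nth_equalityI)

lemma realize_scale_net:
  assumes a: "A \<noteq> []"
  shows "realize (scale_net c A) x = map ((*) c) (realize A x)"
proof -
  have e: "A = butlast A @ [last A]" using a by simp
  have "realize A x = affine (last A) (if butlast A = [] then x else relu (realize (butlast A) x))"
    by (subst e, subst realize_snoc) simp
  then show ?thesis unfolding scale_net_def realize_snoc affine_scale_layer by simp
qed

lemma widths_scale_net: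
  assumes a: "A \<noteq> []"
  shows "widths (scale_net c A) = widths A"
proof -
  have e: "A = butlast A @ [last A]" using a by simp
  show ?thesis unfolding scale_net_def by (subst (3) e) (simp add: widths_def)
qed

lemma composable_scale_net:
  assumes a: "composable n A" "A \<noteq> []"
  shows "composable n (scale_net c A)"
proof -
  have e: "A = butlast A @ [last A]" using a by simp
  have "composable n (butlast A @ [last A])" using a e by simp
  then show ?thesis unfolding scale_net_def composable_append by auto
qed

lemma length_scale_net: "A \<noteq> [] \<Longrightarrow> length (scale_net c A) = length A"
  by (simp add: scale_net_def)

lemma valid_net_scale_net: "valid_net n k A \<Longrightarrow> valid_net n k (scale_net c A)"
  unfolding valid_net_def using widths_scale_net composable_scale_net by (auto simp: scale_net_def)

section \<open>Composition\<close>

definition block :: "nat \<Rightarrow> (nat \<Rightarrow> net) \<Rightarrow> nat \<Rightarrow> net" where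
  "block K mk i = (if i = 0 then (\<lambda>A. A) else with_split_input)
    ((if i = K - 1 then (\<lambda>A. A) else with_neg_output) (mk i))"

definition compose_nets :: "nat \<Rightarrow> (nat \<Rightarrow> net) \<Rightarrow> net" where
  "compose_nets K mk = concat (map (block K mk) [0..<K])"

lemma compose_nets_prefix:
  assumes K: "1 \<le> K" and mk: "\<forall>i<K. valid_net d d (mk i) \<and> length (mk i) = l" and x: "length x = d"
  shows "1 \<le> m \<Longrightarrow> m \<le> K \<Longrightarrow>
    concat (map (block K mk) [0..<m]) \<noteq> [] \<and> composable d (concat (map (block K mk) [0..<m])) \<and>
    last (widths (concat (map (block K mk) [0..<m]))) = (if m = K then d else 2 * d) \<and>
    realize (concat (map (block K mk) [0..<m])) x =
      (if m = K then foldl (\<lambda>y i. realize (mk i) y) x [0..<m]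
       else foldl (\<lambda>y i. realize (mk i) y) x [0..<m]
         @ neg_list (foldl (\<lambda>y i. realize (mk i) y) x [0..<m])) \<and>
    length (foldl (\<lambda>y i. realize (mk i) y) x [0..<m]) = d \<and>
    length (concat (map (block K mk) [0..<m])) = m * l"
proof (induction m)
  case 0 then show ?case by simp
next
  case (Suc m)
  have mk_m: "composable d (mk m)" "mk m \<noteq> []" "last (widths (mk m)) = d" "length (mk m) = l"
    using mk Suc.prems by (auto simp: valid_net_def)
  have len_run: "length (realize (mk m) y) = d" for y using length_realize[OF mk_m(1,2)] mk_m(3) by simp
  define inner where "inner = (if m = K - 1 then mk m else with_neg_output (mk m))"
  have inner: "inner \<noteq> []" "composable d inner" "length inner = l"
      "last (widths inner) = (if Suc m = K then d else 2 * d)"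
      "realize inner y = (if Suc m = K then realize (mk m) y
        else realize (mk m) y @ neg_list (realize (mk m) y))" for y
    using mk_m Suc.prems realize_with_neg_output[OF mk_m(2,1)] composable_with_neg_output[OF mk_m(1,2)]
    by (auto simp: inner_def widths_with_neg_output)
  show ?case
  proof (cases m)
    case 0
    then have blocks: "concat (map (block K mk) [0..<Suc m]) = inner"
      and run: "foldl (\<lambda>y i. realize (mk i) y) x [0..<Suc m] = realize (mk m) x"
      by (simp_all add: block_def inner_def)
    show ?thesis unfolding blocks run using inner len_run 0 by simp
  next
    case (Suc m')
    define Q where "Q = concat (map (block K mk) [0..<m])"
    define Y where "Y = foldl (\<lambda>y i. realize (mk i) y) x [0..<m]"
    have IH: "Q \<noteq> []" "composable d Q" "last (widths Q) = 2 * d"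
      "realize Q x = Y @ neg_list Y" "length Y = d"
      "length Q = m * l"
      using Suc.IH Suc.prems Suc unfolding Q_def Y_def by auto
    have blocks: "concat (map (block K mk) [0..<Suc m]) = Q @ with_split_input inner"
      using Suc by (simp add: Q_def block_def inner_def)
    have run: "foldl (\<lambda>y i. realize (mk i) y) x [0..<Suc m] = realize (mk m) Y" by (simp add: Y_def)
    show ?thesis unfolding blocks run using glue_with_split_input[OF IH(1-5) inner(2,1)] IH inner len_run
      by simp
  qed
qed

lemma widths_block: "mk i \<noteq> [] \<Longrightarrow> widths (block K mk i) =
    (if i = K - 1 then widths (mk i) else butlast (widths (mk i)) @ [2 * last (widths (mk i))])"
  by (cases "i = 0"; simp add: block_def widths_with_neg_output)

lemma widths_compose_nets: "widths (compose_nets K mk) = concat (map (\<lambda>i. widths (block K mk i)) [0..<K])"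
  by (simp add: compose_nets_def widths_def map_concat o_def)

lemma compose_nets_props:
  assumes K: "1 \<le> K" and d: "1 \<le> d" and mk: "\<forall>i<K. valid_net d d (mk i) \<and> length (mk i) = l \<and>
    widths (mk i) = Ls"
    and l: "2 \<le> l"
  shows "wf_net (compose_nets K mk)"
    and "dims (compose_nets K mk) = d #
      concat (map (\<lambda>i. if i = K - 1 then Ls else butlast Ls @ [2 * last Ls]) [0..<K])"
    and "last (dims (compose_nets K mk)) = d"
    and "length (compose_nets K mk) = K * l"
    and "length x = d \<Longrightarrow> realize (compose_nets K mk) x = foldl (\<lambda>y i. realize (mk i) y) x [0..<K]"
proof -
  have mk': "\<forall>i<K. valid_net d d (mk i) \<and> length (mk i) = l" using mk by auto
  note prefix = compose_nets_prefix[OF K mk', of _ K,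
    OF _ K order_refl, unfolded compose_nets_def[symmetric]]
  have net: "compose_nets K mk \<noteq> []" "composable d (compose_nets K mk)"
    "last (widths (compose_nets K mk)) = d" "length (compose_nets K mk) = K * l"
    using prefix[of "replicate d 0"] by simp_all
  then show "length (compose_nets K mk) = K * l" by simp
  show "length x = d \<Longrightarrow> realize (compose_nets K mk) x = foldl (\<lambda>y i. realize (mk i) y) x [0..<K]"
    using prefix by simp
  have ne: "mk i \<noteq> []" if "i < K" for i using mk that by (auto simp: valid_net_def)
  have ws: "widths (compose_nets K mk) =
    concat (map (\<lambda>i. if i = K - 1 then Ls else butlast Ls @ [2 * last Ls]) [0..<K])"
    unfolding widths_compose_nets using mk ne widths_block by (intro arg_cong[where f=concat] map_cong) auto
  have mk0: "valid_net d d (mk 0)" "widths (mk 0) = Ls" using mk K by auto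
  then have pos: "\<forall>x\<in>set Ls. 1 \<le> x" "Ls \<noteq> []" by (auto simp: valid_net_def)
  then have "\<forall>x\<in>set (widths (compose_nets K mk)). 1 \<le> x"
    unfolding ws by (auto dest: in_set_butlastD)
  moreover have "2 \<le> K * l" using K l by (metis le_trans mult_le_mono nat_mult_1)
  ultimately have wf: "wf_net (compose_nets K mk)"
    "dims (compose_nets K mk) = d # widths (compose_nets K mk)"
    using wf_netI[of d "compose_nets K mk"] net d by simp_all
  then show "wf_net (compose_nets K mk)" by simp
  show "dims (compose_nets K mk) = d #
    concat (map (\<lambda>i. if i = K - 1 then Ls else butlast Ls @ [2 * last Ls]) [0..<K])"
    using wf ws by simp
  show "last (dims (compose_nets K mk)) = d" using wf net by simp
qed

lemma maxnorm_compose_dims_le: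
  assumes "\<forall>z\<in>set Ls. z \<le> B" "Ls \<noteq> []" "last Ls = d" "2 * d \<le> B"
  shows "maxnorm (d # concat (map (\<lambda>i. if i = K - 1 then Ls else butlast Ls @ [2 * last Ls]) [0..<K])) \<le> B"
  using assms unfolding maxnorm_def by (subst Max_le_iff) (auto dest: in_set_butlastD)

lemma idx_props: "distinct (idx :: 'a::finite list) \<and> set (idx :: 'a list) = UNIV"
proof -
  obtain xs :: "'a list" where "set xs = UNIV \<and> distinct xs" using finite_distinct_list[of "UNIV :: 'a set"]
    by auto
  then have "\<exists>xs :: 'a list. distinct xs \<and> set xs = UNIV" by blast
  then show ?thesis unfolding idx_def by (rule someI_ex)
qed

lemma length_idx: "length (idx :: 'a::finite list) = CARD('a)"
  using idx_props[where 'a='a] distinct_card by fastforce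

lemma length_vlist[simp]: "length (vlist (y :: real^'d)) = CARD('d)"
  by (simp add: vlist_def length_idx)

lemma vlist_add: "map2 (+) (vlist a) (vlist b) = vlist (a + b :: real^'d)"
  by (auto simp: vlist_def intro!: nth_equalityI)

lemma vlist_scale: "map ((*) c) (vlist a) = vlist (c *\<^sub>R a :: real^'d)"
  by (auto simp: vlist_def intro!: nth_equalityI)

definition index_of :: "'d::finite \<Rightarrow> nat" where
  "index_of i = (THE n. n < length (idx :: 'd list) \<and> idx ! n = i)"

lemma index_of_props: "index_of i < CARD('d) \<and> (idx :: 'd::finite list) ! index_of i = i"
proof -
  have d: "distinct (idx :: 'd list)" and s: "set (idx :: 'd list) = UNIV" using idx_props by auto
  have ex: "\<exists>!n. n < length (idx :: 'd list) \<and> idx ! n = i"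
  proof -
    obtain n where "n < length (idx :: 'd list)" "idx ! n = i" using s by (metis UNIV_I in_set_conv_nth)
    moreover have "m = n" if "m < length (idx :: 'd list)" "idx ! m = i" for m
      using d that \<open>n < _\<close> \<open>idx ! n = i\<close> nth_eq_iff_index_eq by metis
    ultimately show ?thesis by blast
  qed
  show ?thesis unfolding index_of_def using theI'[OF ex] length_idx[where 'a='d] by auto
qed

lemma listv_eq: "listv zs = (\<chi> i. zs ! index_of i)"
  by (simp add: listv_def index_of_def)

lemma continuous_on_affine_nth:
  fixes h :: "'x::topological_space \<Rightarrow> real list"
  assumes L: "length (fst L) = length (snd L)" "\<forall>r\<in>set (fst L). length r = m"
    and h: "\<forall>x. length (h x) = m" "\<forall>j<m. continuous_on UNIV (\<lambda>x. h x ! j)"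
    and i: "i < length (snd L)"
  shows "continuous_on UNIV (\<lambda>x. affine L (h x) ! i)"
proof -
  have "length (fst L ! i) = m" using L i by auto
  then have "affine L (h x) ! i = (\<Sum>j<m. (fst L ! i) ! j * h x ! j) + snd L ! i" for x
    using i L h(1) by (simp add: affine_def mv_dot dot_nth)
  moreover have "continuous_on UNIV (\<lambda>x. (\<Sum>j<m. (fst L ! i) ! j * h x ! j) + snd L ! i)"
    using h(2) by (intro continuous_intros) auto
  ultimately show ?thesis by simp
qed

lemma continuous_on_realize:
  fixes h :: "'x::topological_space \<Rightarrow> real list"
  shows "composable m A \<Longrightarrow> A \<noteq> [] \<Longrightarrow> \<forall>x. length (h x) = m \<Longrightarrow>
    \<forall>j<m. continuous_on UNIV (\<lambda>x. h x ! j) \<Longrightarrow>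
    \<forall>i<last (widths A). continuous_on UNIV (\<lambda>x. realize A (h x) ! i)"
proof (induction A arbitrary: h m)
  case Nil then show ?case by simp
next
  case (Cons L A)
  have L: "length (fst L) = length (snd L)" "\<forall>r\<in>set (fst L). length r = m" using Cons.prems by auto
  note affine_cont = continuous_on_affine_nth[OF L Cons.prems(3,4)]
  show ?case
  proof (cases "A = []")
    case True
    then show ?thesis using affine_cont by (simp add: realize_Cons)
  next
    case False
    have "relu (affine L (h x)) ! i = max 0 (affine L (h x) ! i)" if "i < length (snd L)" for x i
      using L that by (simp add: relu_def length_affine)
    then have "\<forall>i<length (snd L). continuous_on UNIV (\<lambda>x. relu (affine L (h x)) ! i)"
      using affine_cont by (auto intro!: continuous_intros)
    then have "\<forall>i<last (widths A). continuous_on UNIV (\<lambda>x. realize A (relu (affine L (h x))) ! i)"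
      using Cons.prems L False by (intro Cons.IH) (auto simp: length_affine)
    then show ?thesis using False by (simp add: realize_Cons)
  qed
qed

lemma continuous_on_listv_realize:
  assumes "A \<in> NN" "hd (dims A) = CARD('d)" "last (dims A) = CARD('d)"
  shows "continuous_on UNIV (\<lambda>x::real^'d. (listv (realize A (vlist x)) :: real^'d))"
proof -
  have D: "composable CARD('d) A" "dims A = CARD('d) # widths A" "A \<noteq> []"
    using wf_netD[of A] assms(1,2) by (auto simp: NN_def)
  then have last: "last (widths A) = CARD('d)" using assms(3) by simp
  have c: "\<forall>i<CARD('d). continuous_on UNIV (\<lambda>x::real^'d. realize A (vlist x) ! i)"
  proof (rule continuous_on_realize[OF D(1,3), unfolded last])
    show "\<forall>x::real^'d. length (vlist x) = CARD('d)" by simp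
    show "\<forall>i<CARD('d). continuous_on UNIV (\<lambda>x::real^'d. vlist x ! i)"
      by (auto simp: vlist_def length_idx intro!: continuous_intros)
  qed
  show ?thesis unfolding listv_eq
    by (intro continuous_on_vec_lambda) (use c index_of_props in auto)
qed

lemma foldl_realize_vlist:
  assumes "\<And>i y. realize (mk i) (vlist y) = vlist (f i y :: real^'d)"
  shows "foldl (\<lambda>y i. realize (mk i) y) (vlist x) is = vlist (foldl (\<lambda>y i. f i y) x is)"
  by (induction "is" arbitrary: x) (simp_all add: assms)

lemma realizes_imp_valid_net:
  fixes h :: "real^'d \<Rightarrow> real^'d"
  assumes "realizes \<Phi> h"
  shows "valid_net CARD('d) CARD('d) \<Phi>" "2 \<le> length \<Phi>" "dims \<Phi> = CARD('d) # widths \<Phi>"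
    "realize \<Phi> (vlist x) = vlist (h x)"
proof -
  have w: "wf_net \<Phi>" "hd (dims \<Phi>) = CARD('d)" "last (dims \<Phi>) = CARD('d)"
    using assms by (auto simp: realizes_def NN_def)
  note D = wf_netD[OF w(1)]
  show dd: "dims \<Phi> = CARD('d) # widths \<Phi>" using D w(2) by simp
  have ne: "\<Phi> \<noteq> []" using D by auto
  then have "last (widths \<Phi>) = CARD('d)" using w(3) dd by simp
  then show "valid_net CARD('d) CARD('d) \<Phi>" "2 \<le> length \<Phi>" using D dd w(2) ne
    by (simp_all add: valid_net_def)
  show "realize \<Phi> (vlist x) = vlist (h x)" using assms by (simp add: realizes_def)
qed

lemma max_widths_le_maxnorm: "dims \<Phi> = d # widths \<Phi> \<Longrightarrow> \<Phi> \<noteq> [] \<Longrightarrow> Max (set (widths \<Phi>)) \<le> maxnorm (dims \<Phi>)"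
  unfolding maxnorm_def by (intro Max_mono) auto

(* Adding the networks in order of increasing depth means that only the running sum is ever
   deepened, and deepening doubles only its last width d; hence the width bound 2 d plus the
   sum of the widths. *)
definition depth_order :: "'a list list \<Rightarrow> nat list" where
  "depth_order xss = sort_key (\<lambda>i. map length xss ! i) [0..<length xss]"

definition sum_net :: "nat \<Rightarrow> net list \<Rightarrow> net" where
  "sum_net d nets = foldl par_sum_aligned (id_net d) (map ((!) nets) (depth_order nets))"

definition sum_net_widths :: "nat \<Rightarrow> nat list list \<Rightarrow> nat list" where
  "sum_net_widths d wss = foldl par_sum_aligned_widths [d] (map ((!) wss) (depth_order wss))"

lemma depth_order_map_widths: "depth_order (map widths nets) = depth_order nets"
  by (simp add: depth_order_def o_def)

lemma foldl_max: "foldl max (a::'a::linorder) xs = Max (insert a (set xs))"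
proof -
  have e: "(\<lambda>x s. max s x) = (max :: 'a \<Rightarrow> _)" by (auto simp: fun_eq_iff max.commute)
  have m: "Max (set (a # xs)) = fold max xs a" by (rule Max.set_eq_fold)
  have "foldl max a xs = Max (set (a # xs))" by (simp only: foldl_conv_fold e m)
  then show ?thesis by simp
qed

lemma mset_depth_order: "mset (depth_order xss) = mset [0..<length xss]"
  by (simp add: depth_order_def)

lemma set_depth_order: "set (depth_order xss) = {0..<length xss}"
  by (metis mset_depth_order set_mset_mset set_upt)

lemma sum_list_map_depth_order:
  "sum_list (map (f :: nat \<Rightarrow> 'b::comm_monoid_add) (depth_order xss)) = sum_list (map f [0..<length xss])"
  by (metis mset_depth_order mset_map sum_mset_sum_list)

lemma sum_net_props:
  assumes d: "1 \<le> d" and nets: "\<forall>N\<in>set nets. valid_net d d N \<and> 2 \<le> length N"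
  shows "valid_net d d (sum_net d nets)"
    and "length (sum_net d nets) = Max (insert 1 (set (map length nets)))"
    and "widths (sum_net d nets) = sum_net_widths d (map widths nets)"
    and "\<forall>z\<in>set (widths (sum_net d nets)). z \<le> 2 * d + sum_list (map (\<lambda>N. Max (set (widths N))) nets)"
proof -
  define Ns where "Ns = map ((!) nets) (depth_order nets)"
  have "set Ns = set (map ((!) nets) [0..<length nets])" by (simp add: Ns_def set_depth_order)
  then have sNs: "set Ns = set nets" by (simp only: map_nth)
  have okN: "\<forall>N\<in>set Ns. valid_net d d N \<and> 2 \<le> length N" using nets sNs by auto
  note f = valid_net_foldl_par_sum[OF valid_net_id_net[OF d] okN]
  show "valid_net d d (sum_net d nets)" using f by (simp add: sum_net_def Ns_def)
  show "length (sum_net d nets) = Max (insert 1 (set (map length nets)))"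
    using f sNs by (simp add: sum_net_def Ns_def[symmetric] foldl_max id_net_def)
  have "map ((!) (map widths nets)) (depth_order nets) = map widths Ns"
    unfolding Ns_def by (simp add: set_depth_order)
  then show "widths (sum_net d nets) = sum_net_widths d (map widths nets)"
    using f unfolding sum_net_widths_def depth_order_map_widths sum_net_def Ns_def[symmetric]
    by (simp add: id_net_def zeros_def)
  have "map length Ns = map (\<lambda>i. map length nets ! i) (depth_order nets)"
    unfolding Ns_def using set_depth_order[of nets] by auto
  then have sorted: "sorted (map length Ns)" unfolding depth_order_def by (simp add: o_def)
  have "\<forall>z\<in>set (widths (sum_net d nets)). z \<le> 2 * d + 0 + sum_list (map (\<lambda>N. Max (set (widths N))) Ns)"
    unfolding sum_net_def Ns_def[symmetric]
    by (rule widths_foldl_par_sum_le[OF valid_net_id_net[OF d]])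
    (use okN sorted in \<open>auto simp: id_net_def zeros_def\<close>)
  moreover have "sum_list (map (\<lambda>N. Max (set (widths N))) Ns)
      = sum_list (map (\<lambda>N. Max (set (widths N))) nets)"
    unfolding Ns_def map_map sum_list_map_depth_order by (metis map_map map_nth)
  ultimately show "\<forall>z\<in>set (widths (sum_net d nets)).
      z \<le> 2 * d + sum_list (map (\<lambda>N. Max (set (widths N))) nets)"
    by simp
qed

lemma realize_sum_net:
  fixes h :: "nat \<Rightarrow> real^'d \<Rightarrow> real^'d"
  assumes nets: "\<forall>N\<in>set nets. valid_net CARD('d) CARD('d) N \<and> 2 \<le> length N"
    and h: "\<And>i. i < length nets \<Longrightarrow> realize (nets ! i) (vlist y) = vlist (h i y)"
  shows "realize (sum_net CARD('d) nets) (vlist y) = vlist (y + (\<Sum>i<length nets. h i y))"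
proof -
  have acc: "foldl (\<lambda>a i. map2 (+) a (realize (nets ! i) (vlist y))) (vlist y0) is
      = vlist (y0 + sum_list (map (\<lambda>i. h i y) is))" if "set is \<subseteq> {0..<length nets}" for y0 "is"
    using that by (induction "is" arbitrary: y0) (auto simp: h vlist_add add.assoc)
  have "realize (sum_net CARD('d) nets) (vlist y)
      = foldl (\<lambda>a i. map2 (+) a (realize (nets ! i) (vlist y))) (vlist y) (depth_order nets)"
  proof -
    have "\<forall>N\<in>set (map ((!) nets) (depth_order nets)). valid_net CARD('d) CARD('d) N \<and> 2 \<le> length N"
      using nets by (auto simp: set_depth_order)
    from valid_net_foldl_par_sum[OF valid_net_id_net this] show ?thesis
      by (simp add: sum_net_def realize_id_net foldl_map Suc_leI)
  qed
  also have "\<dots> = vlist (y + (\<Sum>i<length nets. h i y))"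
    by (simp add: acc set_depth_order sum_list_map_depth_order
      flip: sum_set_upt_conv_sum_list_nat atLeast0LessThan)
  finally show ?thesis .
qed

section \<open>The Euler scheme on a grid\<close>

lemma sorted_nth_less_imp_less: "sorted xs \<Longrightarrow> i < length xs \<Longrightarrow> j < length xs \<Longrightarrow> xs ! i < xs ! j \<Longrightarrow> i < j"
  by (meson leI linorder_not_le sorted_nth_mono)

(* Beyond the last interval of P the increments are 0 and the Euler step is the identity, so
   every scheme can be run for exactly K steps. *)
definition increment :: "real list \<Rightarrow> (real \<Rightarrow> 'a::ab_group_add) \<Rightarrow> nat \<Rightarrow> 'a" where
  "increment P Z i = (if Suc i < length P then Z (P ! Suc i) - Z (P ! i) else 0)"

definition euler_update :: "(real^'d \<Rightarrow> real^'d) \<Rightarrow> (real^'d \<Rightarrow> real^'d^'d) \<Rightarrow> (real^'d \<Rightarrow> real^'d^'d)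
    \<Rightarrow> real \<Rightarrow> real^'d \<Rightarrow> real^'d \<Rightarrow> real^'d \<Rightarrow> real^'d" where
  "euler_update b S F \<Delta> v w y = y + \<Delta> *\<^sub>R b y + S y *v v + F y *v w"

definition euler_scheme :: "(real^'d \<Rightarrow> real^'d) \<Rightarrow> (real^'d \<Rightarrow> real^'d^'d) \<Rightarrow> (real^'d \<Rightarrow> real^'d^'d)
    \<Rightarrow> real list \<Rightarrow> (real \<Rightarrow> real^'d) \<Rightarrow> (real \<Rightarrow> real^'d) \<Rightarrow> nat \<Rightarrow> real^'d \<Rightarrow> real^'d" where
  "euler_scheme b S F P Wp Jp n x = foldl (\<lambda>y i.
     euler_update b S F (increment P id i) (increment P Wp i) (increment P Jp i) y) x [0..<n]"

lemma foldl_id: "(\<forall>i\<in>set xs. \<forall>y. f y i = y) \<Longrightarrow> foldl f z xs = z"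
  by (induction xs arbitrary: z) auto

locale grid_interval =
  fixes T :: real and K :: nat and t s :: real
  assumes T: "0 < T" and K: "0 < K" and t0: "0 \<le> t" and ts: "t < s" and sT: "s \<le> T"
begin

definition "inner_grid r = {T * real k / real K | k. k \<le> K \<and> t < T * real k / real K \<and>
  T * real k / real K < r}"

lemma finite_inner_grid: "finite (inner_grid r)"
proof -
  have "inner_grid r \<subseteq> (\<lambda>k. T * real k / real K) ` {..K}" by (auto simp: inner_grid_def)
  then show ?thesis by (rule finite_subset) auto
qed

lemma part_eq: "part T K t r = sorted_list_of_set ({t, r} \<union> inner_grid r)"
  by (simp add: part_def inner_grid_def)

lemma card_inner_grid: "card (inner_grid s) \<le> K - 1"
proof -
  have "inner_grid s \<subseteq> (\<lambda>k. T * real k / real K) ` {1..K-1}"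
  proof
    fix y assume "y \<in> inner_grid s"
    then obtain k where k: "k \<le> K" "t < T * real k / real K"
      "T * real k / real K < s" "y = T * real k / real K"
      by (auto simp: inner_grid_def)
    have "k \<noteq> 0"
    proof
      assume "k = 0" then show False using k t0 by simp
    qed
    moreover have "k \<noteq> K" using k sT K by auto
    ultimately show "y \<in> (\<lambda>k. T * real k / real K) ` {1..K-1}" using k by auto
  qed
  then have "card (inner_grid s) \<le> card ((\<lambda>k. T * real k / real K) ` {1..K-1})"
    by (rule card_mono[rotated]) auto
  also have "\<dots> \<le> card {1..K-1}" by (rule card_image_le) auto
  finally show ?thesis by simp
qed

abbreviation "P \<equiv> part T K t s"

lemma part_basic:
  "sorted P" "distinct P" "set P = {t, s} \<union> inner_grid s" "length P = card ({t, s} \<union> inner_grid s)"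
proof -
  have f: "finite ({t, s} \<union> inner_grid s)" using finite_inner_grid by simp
  show "sorted P" unfolding part_eq by (rule sorted_sorted_list_of_set)
  show "distinct P" unfolding part_eq by (rule distinct_sorted_list_of_set)
  show "set P = {t, s} \<union> inner_grid s" unfolding part_eq by (rule set_sorted_list_of_set[OF f])
  show "length P = card ({t, s} \<union> inner_grid s)" unfolding part_eq by (rule length_sorted_list_of_set)
qed

lemma part_range: "y \<in> set P \<Longrightarrow> t \<le> y \<and> y \<le> s"
  using part_basic(3) ts by (auto simp: inner_grid_def)

lemma length_part: "2 \<le> length P" "length P \<le> K + 1"
proof -
  have "card {t, s} = 2" using ts by auto
  then have "2 \<le> card ({t, s} \<union> inner_grid s)"
    using card_mono[of "{t, s} \<union> inner_grid s" "{t, s}"] finite_inner_grid by auto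
  then show "2 \<le> length P" using part_basic(4) by simp
  have "card ({t, s} \<union> inner_grid s) \<le> card {t, s} + card (inner_grid s)" by (rule card_Un_le)
  also have "\<dots> \<le> 2 + (K - 1)" using card_inner_grid \<open>card {t, s} = 2\<close> by simp
  finally show "length P \<le> K + 1" using part_basic(4) K by simp
qed

lemma part_first: "P ! 0 = t"
proof -
  have "t \<in> set P" using part_basic(3) by auto
  then obtain k where k: "k < length P" "P ! k = t" by (metis in_set_conv_nth)
  have "P ! 0 \<le> P ! k" using k part_basic(1) by (intro sorted_nth_mono) auto
  moreover have "0 < length P" using length_part(1) by linarith
  then have "P ! 0 \<in> set P" by (rule nth_mem)
  then have "t \<le> P ! 0" using part_range by auto
  ultimately show ?thesis using k by simp
qed

lemma part_last: "P ! (length P - 1) = s"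
proof -
  have "s \<in> set P" using part_basic(3) by auto
  then obtain k where k: "k < length P" "P ! k = s" by (metis in_set_conv_nth)
  have "P ! k \<le> P ! (length P - 1)" using k part_basic(1) by (intro sorted_nth_mono) auto
  moreover have "P ! (length P - 1) \<le> s" using part_range[of "P ! (length P - 1)"] length_part(1) by simp
  ultimately show ?thesis using k by simp
qed

lemma part_strict:
  assumes a: "i < j" "j < length P"
  shows "P ! i < P ! j"
proof -
  have "P ! i \<le> P ! j" using a part_basic(1) by (intro sorted_nth_mono) auto
  moreover have "P ! i \<noteq> P ! j" using a part_basic(2) nth_eq_iff_index_eq by fastforce
  ultimately show ?thesis by simp
qed

lemma part_between:
  assumes a: "y \<in> set P" "Suc j < length P" "P ! j < y" "y < P ! Suc j"
  shows "False"
proof -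
  obtain k where k: "k < length P" "P ! k = y" using a by (metis in_set_conv_nth)
  have "j < k" using sorted_nth_less_imp_less[OF part_basic(1), of j k] a k by auto
  moreover have "k < Suc j" using sorted_nth_less_imp_less[OF part_basic(1), of k "Suc j"] a k by auto
  ultimately show False by simp
qed

lemma nth_mem_take_part:
  assumes a: "i \<le> j" "j < length P"
  shows "P ! i \<in> set (take (Suc j) P)"
proof -
  have "take (Suc j) P ! i \<in> set (take (Suc j) P)" using a by (intro nth_mem) simp
  then show ?thesis using a by simp
qed

lemma grid_subset_take_part:
  assumes j: "j < length P"
  shows "{t, P ! j} \<union> inner_grid (P ! j) \<subseteq> set (take (Suc j) P)"
proof
  fix y assume y: "y \<in> {t, P ! j} \<union> inner_grid (P ! j)"
  show "y \<in> set (take (Suc j) P)"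
  proof (cases "y \<in> inner_grid (P ! j)")
    case True
    then have y1: "t < y" "y < P ! j" and "y \<in> inner_grid s"
      using part_range[of "P ! j"] j by (auto simp: inner_grid_def)
    then have "y \<in> set P" using part_basic(3) by auto
    then obtain k where k: "k < length P" "P ! k = y" by (metis in_set_conv_nth)
    have "k < j" using sorted_nth_less_imp_less[OF part_basic(1), of k j] y1 k j by auto
    then show ?thesis using k j nth_mem_take_part[of k j] by auto
  next
    case False
    then have "y = P ! 0 \<or> y = P ! j" using y part_first by auto
    then show ?thesis using j nth_mem_take_part[of 0 j] nth_mem_take_part[of j j] by auto
  qed
qed

lemma take_part_subset_grid:
  assumes j: "j < length P"
  shows "set (take (Suc j) P) \<subseteq> {t, P ! j} \<union> inner_grid (P ! j)"
proof
  fix y assume "y \<in> set (take (Suc j) P)"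
  then obtain i where "i < length (take (Suc j) P)" "take (Suc j) P ! i = y" by (metis in_set_conv_nth)
  then have i: "i \<le> j" "y = P ! i" using j by auto
  show "y \<in> {t, P ! j} \<union> inner_grid (P ! j)"
  proof (cases "i = 0 \<or> i = j")
    case True then show ?thesis using i part_first by auto
  next
    case False
    then have "0 < i" "i < j" using i by auto
    then have lt: "t < y" "y < P ! j" using part_strict[of 0 i] part_strict[of i j] j i part_first by auto
    have "y \<in> set P" using i j by auto
    moreover have "y \<noteq> s" using lt part_range[of "P ! j"] j by auto
    ultimately have "y \<in> inner_grid s" using lt part_basic(3) by auto
    then show ?thesis using lt by (auto simp: inner_grid_def)
  qed
qed

lemma part_prefix: "j < length P \<Longrightarrow> part T K t (P ! j) = take (Suc j) P"
proof -
  assume j: "j < length P"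
  have "{t, P ! j} \<union> inner_grid (P ! j) = set (take (Suc j) P)"
    using grid_subset_take_part[OF j] take_part_subset_grid[OF j] by (rule subset_antisym)
  moreover have "sorted (take (Suc j) P)" "distinct (take (Suc j) P)"
    using part_basic(1,2) by (auto simp: sorted_wrt_take)
  ultimately show ?thesis unfolding part_eq[of "P ! j"]
    by (metis sorted_list_of_set.idem_if_sorted_distinct)
qed

lemma grid_below_le_part:
  assumes j: "Suc j < length P" and u: "u \<le> P ! Suc j"
    and g: "g \<in> {T * real k / real K | k. k \<le> K} \<inter> ({..<u} \<union> {0})"
  shows "g \<le> max t (P ! j)"
proof (rule ccontr)
  assume "\<not> g \<le> max t (P ! j)"
  then have g1: "t < g" "P ! j < g" by auto
  then have "g \<noteq> 0" using t0 by auto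
  then obtain k where k: "k \<le> K" "g = T * real k / real K" "g < u" using g by auto
  have "g < P ! Suc j" using k u by auto
  moreover have "P ! Suc j \<le> s" using part_range j by auto
  ultimately have "g \<in> inner_grid s" using k g1 by (auto simp: inner_grid_def)
  then have "g \<in> set P" using part_basic(3) by auto
  then show False using part_between[of g j] j g1 \<open>g < P ! Suc j\<close> by auto
qed

lemma part_flr:
  assumes j: "Suc j < length P" and u: "P ! j < u" "u \<le> P ! Suc j"
  shows "max t (flr T K u) = P ! j"
proof -
  define A where "A = {T * real k / real K | k. k \<le> K} \<inter> ({..<u} \<union> {0})"
  have A: "finite A" "0 \<in> A" unfolding A_def by (auto intro: exI[of _ 0])
  have flr: "flr T K u = Max A" by (simp add: flr_def A_def)
  note bound = grid_below_le_part[OF j u(2), folded A_def]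
  show ?thesis
  proof (cases j)
    case 0
    then have "Max A \<le> t" using A bound part_first t0 by (intro Max.boundedI) auto
    then show ?thesis using 0 part_first flr by simp
  next
    case (Suc j')
    have tj: "t < P ! j" using part_strict[of 0 j] j part_first Suc by auto
    have "P ! j \<noteq> s" using part_strict[of j "Suc j"] j part_range[of "P ! Suc j"] by auto
    moreover have "P ! j \<in> set P" using j by auto
    ultimately have "P ! j \<in> inner_grid s" using tj part_basic(3) by auto
    then have "P ! j \<in> A" using u by (auto simp: A_def inner_grid_def)
    then have "Max A = P ! j" using bound tj A by (intro Max_eqI) auto
    then show ?thesis using tj flr by simp
  qed
qed

lemma part_has_integral: "j < length P \<Longrightarrow>
  ((\<lambda>u. h (max t (flr T K u)) :: 'a::banach)
    has_integral (\<Sum>i<j. (P ! Suc i - P ! i) *\<^sub>R h (P ! i))) {t..P ! j}"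
proof (induction j)
  case 0
  have "{t..P ! 0} = {t}" using part_first by simp
  then show ?case by (simp add: has_integral_refl(2))
next
  case (Suc j)
  have lt: "P ! j < P ! Suc j" using part_strict Suc by auto
  have tj: "t \<le> P ! j" using part_range[of "P ! j"] Suc by auto
  have c: "((\<lambda>u. h (P ! j)) has_integral (P ! Suc j - P ! j) *\<^sub>R h (P ! j)) {P ! j..P ! Suc j}"
    using has_integral_const_real[of "h (P ! j)" "P ! j" "P ! Suc j"] lt by simp
  have c2: "((\<lambda>u. h (max t (flr T K u))) has_integral (P ! Suc j - P ! j) *\<^sub>R h (P ! j)) {P ! j..P ! Suc j}"
    by (rule has_integral_spike_finite[OF _ _ c, of "{P ! j}"]) (use part_flr[of j] Suc in auto)
  show ?case using has_integral_combine[OF tj less_imp_le[OF lt] Suc.IH[OF Suc_lessD[OF Suc.prems]] c2]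
    by (simp add: add.commute)
qed

lemma simple_int_take_Suc:
  assumes a: "Suc j < length P"
  shows "simple_int (take (Suc (Suc j)) P) H Z
    = simple_int (take (Suc j) P) H Z + H (P ! Suc j) *v (Z (P ! Suc j) - Z (P ! j))"
proof -
  have "simple_int (take (Suc (Suc j)) P) H Z = (\<Sum>i<Suc j. H (P ! Suc i) *v (Z (P ! Suc i) - Z (P ! i)))"
    unfolding simple_int_def using a by (intro sum.cong) auto
  moreover have "simple_int (take (Suc j) P) H Z = (\<Sum>i<j. H (P ! Suc i) *v (Z (P ! Suc i) - Z (P ! i)))"
    unfolding simple_int_def using a by (intro sum.cong) auto
  ultimately show ?thesis by simp
qed

lemma euler_eq_at_part:
  assumes E: "euler_eq T K b S Fm Wp Jp t x X" and j: "j < length P"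
  shows "X (P ! j) = x + (\<Sum>i<j. (P ! Suc i - P ! i) *\<^sub>R b (X (P ! i)))
      + simple_int (take (Suc j) P) (\<lambda>u. S (X (max t (flr T K u)))) Wp
      + simple_int (take (Suc j) P) (\<lambda>u. Fm (X (max t (flr T K u)))) Jp"
proof -
  have r: "P ! j \<in> {t..T}" using part_range[of "P ! j"] j sT by auto
  have "integral {t..P ! j} (\<lambda>u. b (X (max t (flr T K u)))) = (\<Sum>i<j. (P ! Suc i - P ! i) *\<^sub>R b (X (P ! i)))"
    using part_has_integral[OF j, of "\<lambda>v. b (X v)"] by (rule integral_unique)
  then show ?thesis using E r part_prefix[OF j] unfolding euler_eq_def by auto
qed

lemma increment_part: "Suc i < length P \<Longrightarrow> increment P Z i = Z (P ! Suc i) - Z (P ! i)"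
  by (simp add: increment_def)

lemma euler_eq_part_step:
  assumes E: "euler_eq T K b S Fm Wp Jp t x X" and j: "Suc j < length P"
  shows "X (P ! Suc j) =
    euler_update b S Fm (increment P id j) (increment P Wp j) (increment P Jp j) (X (P ! j))"
proof -
  have fl: "max t (flr T K (P ! Suc j)) = P ! j" using part_flr[OF j] part_strict[of j "Suc j"] j by auto
  define Sb where "Sb = (\<Sum>i<j. (P ! Suc i - P ! i) *\<^sub>R b (X (P ! i)))"
  define SW where "SW = simple_int (take (Suc j) P) (\<lambda>u. S (X (max t (flr T K u)))) Wp"
  define SJ where "SJ = simple_int (take (Suc j) P) (\<lambda>u. Fm (X (max t (flr T K u)))) Jp"
  have prev: "X (P ! j) = x + Sb + SW + SJ"
    unfolding Sb_def SW_def SJ_def using euler_eq_at_part[OF E] j by simp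
  have "X (P ! Suc j) = x + (Sb + (P ! Suc j - P ! j) *\<^sub>R b (X (P ! j)))
      + (SW + S (X (P ! j)) *v (Wp (P ! Suc j) - Wp (P ! j)))
      + (SJ + Fm (X (P ! j)) *v (Jp (P ! Suc j) - Jp (P ! j)))"
    unfolding Sb_def SW_def SJ_def using euler_eq_at_part[OF E j]
      by (simp add: simple_int_take_Suc[OF j] fl)
  then show ?thesis unfolding prev euler_update_def increment_part[OF j] by (simp add: algebra_simps)
qed

lemma euler_eq_part_foldl:
  assumes E: "euler_eq T K b S Fm Wp Jp t x X"
  shows "j < length P \<Longrightarrow> X (P ! j) = euler_scheme b S Fm P Wp Jp j x"
proof (induction j)
  case 0
  then show ?case using euler_eq_at_part[OF E, of 0]
    by (simp add: simple_int_def part_first euler_scheme_def)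
next
  case (Suc j)
  then show ?case using euler_eq_part_step[OF E Suc.prems] by (simp add: id_def euler_scheme_def)
qed

lemma euler_eq_imp_euler_scheme:
  assumes E: "euler_eq T K b S Fm Wp Jp t x X"
  shows "X s = euler_scheme b S Fm P Wp Jp K x"
proof -
  define n where "n = length P - 1"
  have n: "n \<le> K" "n < length P" "P ! n = s" using length_part part_last by (auto simp: n_def)
  have "[0..<K] = [0..<n] @ [n..<K]" using n(1) by (metis le_add_diff_inverse upt_add_eq_append zero_le)
  moreover have "foldl (\<lambda>y i. euler_update b S Fm (increment P id i) (increment P Wp i) (increment P Jp i) y)
      z [n..<K] = z" for z
    by (rule foldl_id) (auto simp: n_def increment_def euler_update_def)
  ultimately show ?thesis using euler_eq_part_foldl[OF E n(2)] n(3) by (simp add: euler_scheme_def)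
qed

end

definition euler_step_net :: "nat \<Rightarrow> net \<Rightarrow> net \<Rightarrow> net \<Rightarrow> real \<Rightarrow> net" where
  "euler_step_net d \<Phi>b \<Phi>s \<Phi>f \<Delta> = sum_net d [scale_net \<Delta> \<Phi>b, \<Phi>s, \<Phi>f]"

definition scheme_net :: "real \<Rightarrow> nat \<Rightarrow> net \<Rightarrow> ('a::ab_group_add \<Rightarrow> net) \<Rightarrow> ('a \<Rightarrow> net)
    \<Rightarrow> (real \<Rightarrow> 'a) \<Rightarrow> (real \<Rightarrow> 'a) \<Rightarrow> nat \<Rightarrow> real \<Rightarrow> real \<Rightarrow> net" where
  "scheme_net T K \<Phi>b \<Phi>s \<Phi>f Wp Jp d t s = (let P = part T K t s in compose_nets K (\<lambda>i.
     euler_step_net d \<Phi>b (\<Phi>s (increment P Wp i)) (\<Phi>f (increment P Jp i)) (increment P id i)))"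

context
  fixes \<Phi>b :: net and \<Phi>s \<Phi>f :: "real^'d \<Rightarrow> net"
    and b :: "real^'d \<Rightarrow> real^'d" and S Fm :: "real^'d \<Rightarrow> real^'d^'d"
  assumes realizes_b: "realizes \<Phi>b b"
    and realizes_S: "\<And>v. realizes (\<Phi>s v) (\<lambda>x. S x *v v)"
    and realizes_F: "\<And>v. realizes (\<Phi>f v) (\<lambda>x. Fm x *v v)"
    and dims_S: "\<And>v. dims (\<Phi>s v) = dims (\<Phi>s 0)"
    and dims_F: "\<And>v. dims (\<Phi>f v) = dims (\<Phi>f 0)"
begin

lemma widths_S: "widths (\<Phi>s v) = widths (\<Phi>s 0)" and widths_F: "widths (\<Phi>f v) = widths (\<Phi>f 0)"
  using dims_S[of v] dims_F[of v] realizes_imp_valid_net(3)[OF realizes_S]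
    realizes_imp_valid_net(3)[OF realizes_F]
  by simp_all

lemma step_components_valid:
  "\<forall>N\<in>set [scale_net \<Delta> \<Phi>b, \<Phi>s v, \<Phi>f w]. valid_net CARD('d) CARD('d) N \<and> 2 \<le> length N"
proof -
  have "\<Phi>b \<noteq> []" using realizes_imp_valid_net(2)[OF realizes_b] by auto
  then show ?thesis
    using realizes_imp_valid_net(1,2)[OF realizes_b] realizes_imp_valid_net(1,2)[OF realizes_S]
      realizes_imp_valid_net(1,2)[OF realizes_F] valid_net_scale_net length_scale_net by auto
qed

lemma euler_step_net_props:
  fixes v w :: "real^'d" and \<Delta> :: real
  defines "d \<equiv> CARD('d)" and "N \<equiv> euler_step_net CARD('d) \<Phi>b (\<Phi>s v) (\<Phi>f w) \<Delta>"
  shows "valid_net d d N"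
    and "length N = max (length \<Phi>b) (max (length (\<Phi>s 0)) (length (\<Phi>f 0)))"
    and "widths N = sum_net_widths d [widths \<Phi>b, widths (\<Phi>s 0), widths (\<Phi>f 0)]"
    and "\<forall>z\<in>set (widths N). z \<le> 2 * d + maxnorm (dims \<Phi>b) + maxnorm (dims (\<Phi>s 0)) + maxnorm (dims (\<Phi>f 0))"
    and "realize N (vlist y) = vlist (euler_update b S Fm \<Delta> v w y)"
proof -
  note b = realizes_imp_valid_net[OF realizes_b, folded d_def]
  note s = realizes_imp_valid_net[OF realizes_S, folded d_def]
  note f = realizes_imp_valid_net[OF realizes_F, folded d_def]
  have ne: "\<Phi>b \<noteq> []" using b(2) by auto
  have lengths: "length (\<Phi>s v) = length (\<Phi>s 0)" "length (\<Phi>f w) = length (\<Phi>f 0)"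
    using widths_S[of v] widths_F[of w] by (metis widths_simps(4))+
  note nets = step_components_valid[of \<Delta> v w, folded d_def]
  have d1: "1 \<le> d" by (simp add: d_def Suc_leI)
  note sum = sum_net_props[OF d1 nets, folded euler_step_net_def, unfolded d_def, folded N_def d_def]
  show "valid_net d d N" using sum(1) .
  show "length N = max (length \<Phi>b) (max (length (\<Phi>s 0)) (length (\<Phi>f 0)))"
    using sum(2) b(2) s(2)[of 0] f(2)[of 0] by (simp add: length_scale_net[OF ne] lengths max_def)
  show "widths N = sum_net_widths d [widths \<Phi>b, widths (\<Phi>s 0), widths (\<Phi>f 0)]"
    using sum(3) by (simp add: widths_scale_net[OF ne] widths_S[of v] widths_F[of w])
  have "Max (set (widths \<Phi>b)) + Max (set (widths (\<Phi>s 0))) + Max (set (widths (\<Phi>f 0)))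
      \<le> maxnorm (dims \<Phi>b) + maxnorm (dims (\<Phi>s 0)) + maxnorm (dims (\<Phi>f 0))"
    using b s[of 0] f[of 0] by (intro add_mono max_widths_le_maxnorm) (auto simp: valid_net_def)
  then show "\<forall>z\<in>set (widths N).
      z \<le> 2 * d + maxnorm (dims \<Phi>b) + maxnorm (dims (\<Phi>s 0)) + maxnorm (dims (\<Phi>f 0))"
    using sum(4) by (fastforce simp: widths_scale_net[OF ne] widths_S[of v] widths_F[of w])
  have "realize N (vlist y) = vlist (y + (\<Sum>i<length [scale_net \<Delta> \<Phi>b, \<Phi>s v, \<Phi>f w].
      [\<Delta> *\<^sub>R b y, S y *v v, Fm y *v w] ! i))"
    unfolding N_def euler_step_net_def d_def
    by (rule realize_sum_net[OF nets[unfolded d_def], where h="\<lambda>i y. [\<Delta> *\<^sub>R b y, S y *v v, Fm y *v w] ! i"])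
      (auto simp: less_Suc_eq realize_scale_net[OF ne] b(4) s(4) f(4) vlist_scale)
  then show "realize N (vlist y) = vlist (euler_update b S Fm \<Delta> v w y)"
    by (simp add: euler_update_def numeral_3_eq_3 add.assoc)
qed

lemma scheme_net_props:
  fixes T t s :: real and K :: nat and Wp Jp :: "real \<Rightarrow> real^'d"
  defines "d \<equiv> CARD('d)" and "\<N> \<equiv> scheme_net T K \<Phi>b \<Phi>s \<Phi>f Wp Jp CARD('d) t s"
  assumes K: "0 < K"
  shows "\<N> \<in> NN" and "hd (dims \<N>) = d" and "last (dims \<N>) = d"
    and "continuous_on UNIV (\<lambda>x::real^'d. (listv (realize \<N> (vlist x)) :: real^'d))"
    and "realize \<N> (vlist x) = vlist (euler_scheme b S Fm (part T K t s) Wp Jp K x)"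
    and "dims \<N> = dims (scheme_net T K \<Phi>b \<Phi>s \<Phi>f Wp' Jp' d t' s')"
    and "length (dims \<N>) =
      K * (max (length (dims \<Phi>b)) (max (length (dims (\<Phi>s 0))) (length (dims (\<Phi>f 0)))) - 1) + 1"
    and "maxnorm (dims \<N>) \<le> 2 * d + maxnorm (dims \<Phi>b) + maxnorm (dims (\<Phi>s 0)) + maxnorm (dims (\<Phi>f 0))"
proof -
  have N_eq: "\<N> = scheme_net T K \<Phi>b \<Phi>s \<Phi>f Wp Jp d t s" by (simp add: \<N>_def d_def)
  have d1: "1 \<le> d" by (simp add: d_def Suc_leI)
  have K1: "1 \<le> K" using K by simp
  define Ls where "Ls = sum_net_widths d [widths \<Phi>b, widths (\<Phi>s 0), widths (\<Phi>f 0)]"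
  define l where "l = max (length \<Phi>b) (max (length (\<Phi>s 0)) (length (\<Phi>f 0)))"
  define mk where "mk Wp Jp t s i = euler_step_net d \<Phi>b (\<Phi>s (increment (part T K t s) Wp i))
      (\<Phi>f (increment (part T K t s) Jp i)) (increment (part T K t s) id i)"
    for Wp Jp :: "real \<Rightarrow> real^'d" and t s :: real and i :: nat
  have scheme: "scheme_net T K \<Phi>b \<Phi>s \<Phi>f Wp Jp d t s = compose_nets K (mk Wp Jp t s)" for Wp Jp t s
    by (simp add: scheme_net_def mk_def[abs_def] Let_def)
  note step = euler_step_net_props[folded d_def]
  have l: "2 \<le> l" using realizes_imp_valid_net(2)[OF realizes_b] by (simp add: l_def)
  have "\<forall>i<K. valid_net d d (mk Wp Jp t s i) \<and> length (mk Wp Jp t s i) = l \<and> widths (mk Wp Jp t s i) = Ls"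
    for Wp Jp t s by (simp add: mk_def l_def Ls_def step)
  note C = compose_nets_props[OF K1 d1 this l, folded scheme]
  show NN: "\<N> \<in> NN" using C(1) by (simp add: NN_def N_eq)
  show hd: "hd (dims \<N>) = d" using C(2) by (simp add: N_eq)
  show last: "last (dims \<N>) = d" using C(3) by (simp add: N_eq)
  show "continuous_on UNIV (\<lambda>x::real^'d. (listv (realize \<N> (vlist x)) :: real^'d))"
    using continuous_on_listv_realize NN hd last unfolding d_def by blast
  show "realize \<N> (vlist x) = vlist (euler_scheme b S Fm (part T K t s) Wp Jp K x)"
    using C(5)[of "vlist x" Wp Jp t s]
    by (simp add: N_eq d_def foldl_realize_vlist mk_def step(5)[unfolded d_def] euler_scheme_def)
  show "dims \<N> = dims (scheme_net T K \<Phi>b \<Phi>s \<Phi>f Wp' Jp' d t' s')"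
    using C(2) by (simp add: N_eq)
  have "length (dims \<N>) = Suc (K * l)"
    using C(4)[of Wp Jp t s] K l unfolding N_eq by (subst length_dims) auto
  then show "length (dims \<N>)
      = K * (max (length (dims \<Phi>b)) (max (length (dims (\<Phi>s 0))) (length (dims (\<Phi>f 0)))) - 1) + 1"
    using realizes_imp_valid_net(3)[OF realizes_b] realizes_imp_valid_net(3)[OF realizes_S, of 0]
      realizes_imp_valid_net(3)[OF realizes_F, of 0] by (simp add: l_def)
  obtain N where N: "valid_net d d N" "widths N = Ls"
    "\<forall>z\<in>set (widths N). z \<le> 2 * d + maxnorm (dims \<Phi>b) + maxnorm (dims (\<Phi>s 0)) + maxnorm (dims (\<Phi>f 0))"
    using step(1,3,4)[of 0 0 0] unfolding Ls_def by blast
  then show "maxnorm (dims \<N>) \<le> 2 * d + maxnorm (dims \<Phi>b) + maxnorm (dims (\<Phi>s 0)) + maxnorm (dims (\<Phi>f 0))"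
    unfolding N_eq C(2) by (intro maxnorm_compose_dims_le) (auto simp: valid_net_def)
qed

end

theorem lemma5p11:
  fixes T c :: real and f :: "real \<Rightarrow> real"
    and \<beta> :: "real^'d \<Rightarrow> real^'d" and \<sigma> :: "real^'d \<Rightarrow> real^'d^'d"
    and \<gamma> :: "real^'d \<Rightarrow> real^'d \<Rightarrow> real^'d" and g :: "real^'d \<Rightarrow> real"
    and \<nu> :: "(real^'d) measure"
    and \<beta>e :: "real \<Rightarrow> real^'d \<Rightarrow> real^'d" and \<sigma>e :: "real \<Rightarrow> real^'d \<Rightarrow> real^'d^'d"
    and \<gamma>e :: "real \<Rightarrow> real^'d \<Rightarrow> real^'d \<Rightarrow> real^'d" and ge :: "real \<Rightarrow> real^'d \<Rightarrow> real"
    and F :: "real \<Rightarrow> real^'d \<Rightarrow> real^'d^'d" and G :: "real^'d \<Rightarrow> real^'d"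
    and \<Phi>\<beta> :: "real \<Rightarrow> net" and \<Phi>\<sigma> \<Phi>F :: "real \<Rightarrow> real^'d \<Rightarrow> net"
    and W J :: "int list \<Rightarrow> 'w \<Rightarrow> real \<Rightarrow> real^'d"
    and X :: "int list \<Rightarrow> real \<Rightarrow> real \<Rightarrow> real^'d \<Rightarrow> 'w \<Rightarrow> real \<Rightarrow> real^'d"
    and K :: nat and \<omega> :: 'w
  assumes setting: "setting T c f \<beta> \<sigma> \<gamma> g \<nu> \<beta>e \<sigma>e \<gamma>e ge"
    and F_meas: "\<forall>\<epsilon>\<in>{0<..<1}. F \<epsilon> \<in> borel_measurable borel"
    and G_meas: "G \<in> borel_measurable borel"
    and factor: "\<forall>\<epsilon>\<in>{0<..<1}. \<forall>y z. \<gamma>e \<epsilon> y z = F \<epsilon> y *v G z"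
    and net_\<beta>: "\<forall>\<epsilon>\<in>{0<..<1}. realizes (\<Phi>\<beta> \<epsilon>) (\<beta>e \<epsilon>)"
    and net_\<sigma>: "\<forall>\<epsilon>\<in>{0<..<1}. \<forall>v. realizes (\<Phi>\<sigma> \<epsilon> v) (\<lambda>x. \<sigma>e \<epsilon> x *v v)"
    and net_F: "\<forall>\<epsilon>\<in>{0<..<1}. \<forall>v. realizes (\<Phi>F \<epsilon> v) (\<lambda>x. F \<epsilon> x *v v)"
    and dims_\<sigma>: "\<forall>\<epsilon>\<in>{0<..<1}. \<forall>v. dims (\<Phi>\<sigma> \<epsilon> v) = dims (\<Phi>\<sigma> \<epsilon> 0)"
    and dims_F: "\<forall>\<epsilon>\<in>{0<..<1}. \<forall>v. dims (\<Phi>F \<epsilon> v) = dims (\<Phi>F \<epsilon> 0)"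
    and K_pos: "0 < K"
    and X_sol: "\<forall>\<theta>. \<forall>\<epsilon>\<in>{0<..<1}. \<forall>t\<in>{0..<T}. \<forall>x w.
                  euler_eq T K (\<beta>e \<epsilon>) (\<sigma>e \<epsilon>) (F \<epsilon>) (W \<theta> w) (J \<theta> w) t x (X \<theta> \<epsilon> t x w)"
  shows "\<exists>\<X> :: int list \<Rightarrow> real \<Rightarrow> real \<Rightarrow> real \<Rightarrow> net.
    (\<forall>\<theta>. \<forall>\<epsilon>\<in>{0<..<1}. \<forall>t\<in>{0..<T}. \<forall>s\<in>{t<..T}.
        \<X> \<theta> \<epsilon> t s \<in> NN \<and> hd (dims (\<X> \<theta> \<epsilon> t s)) = CARD('d) \<and> last (dims (\<X> \<theta> \<epsilon> t s)) = CARD('d) \<and>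
        continuous_on UNIV (\<lambda>x::real^'d. (listv (realize (\<X> \<theta> \<epsilon> t s) (vlist x)) :: real^'d)) \<and>
        (\<forall>x. realize (\<X> \<theta> \<epsilon> t s) (vlist x) = vlist (X \<theta> \<epsilon> t x \<omega> s))) \<and>
    (\<forall>\<theta>1 \<theta>2. \<forall>\<epsilon>\<in>{0<..<1}. \<forall>t1\<in>{0..<T}. \<forall>t2\<in>{0..<T}. \<forall>s1\<in>{t1<..T}. \<forall>s2\<in>{t2<..T}.
        dims (\<X> \<theta>1 \<epsilon> t1 s1) = dims (\<X> \<theta>2 \<epsilon> t2 s2)) \<and>
    (\<forall>\<theta>. \<forall>\<epsilon>\<in>{0<..<1}. \<forall>t\<in>{0..<T}. \<forall>s\<in>{t<..T}.
        length (dims (\<X> \<theta> \<epsilon> t s)) = K * (max (length (dims (\<Phi>\<beta> \<epsilon>)))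
            (max (length (dims (\<Phi>\<sigma> \<epsilon> 0))) (length (dims (\<Phi>F \<epsilon> 0)))) - 1) + 1) \<and>
    (\<forall>\<theta>. \<forall>\<epsilon>\<in>{0<..<1}. \<forall>t\<in>{0..<T}. \<forall>s\<in>{t<..T}.
        maxnorm (dims (\<X> \<theta> \<epsilon> t s)) \<le> 2 * CARD('d) + maxnorm (dims (\<Phi>\<beta> \<epsilon>))
            + maxnorm (dims (\<Phi>\<sigma> \<epsilon> 0)) + maxnorm (dims (\<Phi>F \<epsilon> 0)))"
proof -
  have T: "0 < T" using setting by (simp add: setting_def Let_def)
  have hyps: "realizes (\<Phi>\<beta> \<epsilon>) (\<beta>e \<epsilon>)" "\<And>v. realizes (\<Phi>\<sigma> \<epsilon> v) (\<lambda>x. \<sigma>e \<epsilon> x *v v)"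
      "\<And>v. realizes (\<Phi>F \<epsilon> v) (\<lambda>x. F \<epsilon> x *v v)" "\<And>v. dims (\<Phi>\<sigma> \<epsilon> v) = dims (\<Phi>\<sigma> \<epsilon> 0)"
      "\<And>v. dims (\<Phi>F \<epsilon> v) = dims (\<Phi>F \<epsilon> 0)" if "\<epsilon> \<in> {0<..<1}" for \<epsilon>
    using that net_\<beta> net_\<sigma> net_F dims_\<sigma> dims_F by blast+
  note scheme = scheme_net_props[OF hyps K_pos]
  have X_eq: "X \<theta> \<epsilon> t x \<omega> s = euler_scheme (\<beta>e \<epsilon>) (\<sigma>e \<epsilon>) (F \<epsilon>) (part T K t s) (W \<theta> \<omega>) (J \<theta> \<omega>) K x"
    if "\<epsilon> \<in> {0<..<1}" "t \<in> {0..<T}" "s \<in> {t<..T}" for \<theta> \<epsilon> t s x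
    using that X_sol T K_pos
    by (intro grid_interval.euler_eq_imp_euler_scheme) (auto simp: grid_interval_def)
  show ?thesis
    by (intro exI[of _ "\<lambda>\<theta> \<epsilon> t s. scheme_net T K (\<Phi>\<beta> \<epsilon>) (\<Phi>\<sigma> \<epsilon>) (\<Phi>F \<epsilon>) (W \<theta> \<omega>) (J \<theta> \<omega>) CARD('d) t s"])
      (intro conjI ballI allI scheme(4,6) | auto simp: scheme(1-3,5,7,8) X_eq)+
qed

end
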